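(* Let $\mathscr H_1,\mathscr H_2$ be complex Hilbert spaces, $B\in\mathbb B(\mathscr H_2,\mathscr H_1)$, $C\in\mathbb B(\mathscr H_1,\mathscr H_2)$, and let $T=\begin{bmatrix}0&B\\ C&0\end{bmatrix}$ acting on $\mathscr H_1\oplus\mathscr H_2$. Then for any $r\ge1$ and $0\le\alpha\le1$, $$w^{2r}(T)\le \frac12\max\left\{\left\||C|^{4r\alpha}+|B^*|^{4r(1-\alpha)}\right\|,\ \left\||B|^{4r\alpha}+|C^*|^{4r(1-\alpha)}\right\|\right\}.$$
   Context: For a bounded operator $S$ on a complex Hilbert space, $w(S)=\sup\{|\langle Sx,x\rangle|:\|x\|=1\}$ is the numerical radius, $|S|=(S^*S)^{1/2}$, and $\|\cdot\|$ is the operator norm. *)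

theory Defs
  imports "HOL-Analysis.Analysis" "HOL-Computational_Algebra.Polynomial"
begin

class complex_vector = real_vector +
  fixes scaleC :: "complex \<Rightarrow> 'a \<Rightarrow> 'a"  (infixr \<open>*\<^sub>C\<close> 75)
  assumes scaleC_add_right: "a *\<^sub>C (x + y) = a *\<^sub>C x + a *\<^sub>C y"
    and scaleC_add_left: "(a + b) *\<^sub>C x = a *\<^sub>C x + b *\<^sub>C x"
    and scaleC_scaleC: "a *\<^sub>C (b *\<^sub>C x) = (a * b) *\<^sub>C x"
    and scaleC_one: "1 *\<^sub>C x = x"
    and scaleR_scaleC: "scaleR r = scaleC (complex_of_real r)"

class complex_normed_vector = complex_vector + real_normed_vector +
  assumes norm_scaleC: "norm (a *\<^sub>C x) = cmod a * norm x"

class complex_inner = complex_normed_vector +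
  fixes cinner :: "'a \<Rightarrow> 'a \<Rightarrow> complex"
  assumes cinner_commute: "cinner x y = cnj (cinner y x)"
    and cinner_add_left: "cinner (x + y) z = cinner x z + cinner y z"
    and cinner_scaleC_left: "cinner (a *\<^sub>C x) y = cnj a * cinner x y"
    and cinner_self_real: "Im (cinner x x) = 0"
    and cinner_self_nonneg: "0 \<le> Re (cinner x x)"
    and cinner_self_eq_zero: "cinner x x = 0 \<longleftrightarrow> x = 0"
    and norm_eq_sqrt_cinner: "norm x = sqrt (Re (cinner x x))"

class chilbert_space = complex_inner + complete_space

instantiation prod :: (complex_vector, complex_vector) complex_vector
begin
definition scaleC_prod_def: "a *\<^sub>C x = (a *\<^sub>C fst x, a *\<^sub>C snd x)"
instance
proof
  fix a b :: complex and x y :: "'a \<times> 'b" and r :: real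
  show "a *\<^sub>C (x + y) = a *\<^sub>C x + a *\<^sub>C y"
    by (simp add: scaleC_prod_def scaleC_add_right)
  show "(a + b) *\<^sub>C x = a *\<^sub>C x + b *\<^sub>C x"
    by (simp add: scaleC_prod_def scaleC_add_left)
  show "a *\<^sub>C b *\<^sub>C x = (a * b) *\<^sub>C x"
    by (simp add: scaleC_prod_def scaleC_scaleC)
  show "1 *\<^sub>C x = x"
    by (simp add: scaleC_prod_def scaleC_one)
  show "(scaleR r :: 'a \<times> 'b \<Rightarrow> _) = scaleC (complex_of_real r)"
    apply (rule ext)
    apply (simp add: scaleC_prod_def prod_eq_iff scaleR_scaleC)
    done
qed
end

instance prod :: (complex_normed_vector, complex_normed_vector) complex_normed_vector
proof
  fix a :: complex and x :: "'a \<times> 'b"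
  have "norm (a *\<^sub>C x) = sqrt ((cmod a)\<^sup>2 * ((norm (fst x))\<^sup>2 + (norm (snd x))\<^sup>2))"
    by (simp add: scaleC_prod_def norm_prod_def norm_scaleC power_mult_distrib algebra_simps)
  also have "\<dots> = cmod a * norm x"
    by (simp add: real_sqrt_mult norm_prod_def)
  finally show "norm (a *\<^sub>C x) = cmod a * norm x" .
qed

instantiation prod :: (complex_inner, complex_inner) complex_inner
begin
definition cinner_prod_def: "cinner x y = cinner (fst x) (fst y) + cinner (snd x) (snd y)"
instance
proof
  fix a :: complex and x y z :: "'a \<times> 'b"
  show "cinner x y = cnj (cinner y x)"
    by (simp add: cinner_prod_def cinner_commute[of "fst x"] cinner_commute[of "snd x"])
  show "cinner (x + y) z = cinner x z + cinner y z"
    by (simp add: cinner_prod_def cinner_add_left)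
  show "cinner (a *\<^sub>C x) y = cnj a * cinner x y"
    by (simp add: cinner_prod_def scaleC_prod_def cinner_scaleC_left algebra_simps)
  show "Im (cinner x x) = 0"
    by (simp add: cinner_prod_def cinner_self_real)
  show "0 \<le> Re (cinner x x)"
    by (simp add: cinner_prod_def cinner_self_nonneg)
  have n1: "(norm (fst x))\<^sup>2 = Re (cinner (fst x) (fst x))"
    by (simp add: norm_eq_sqrt_cinner cinner_self_nonneg)
  have n2: "(norm (snd x))\<^sup>2 = Re (cinner (snd x) (snd x))"
    by (simp add: norm_eq_sqrt_cinner cinner_self_nonneg)
  show "norm x = sqrt (Re (cinner x x))"
    by (simp add: norm_prod_def cinner_prod_def n1 n2)
  show "cinner x x = 0 \<longleftrightarrow> x = 0"
  proof
    assume h: "cinner x x = 0"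
    have "Re (cinner (fst x) (fst x)) + Re (cinner (snd x) (snd x)) = 0"
      using h by (simp add: cinner_prod_def complex_eq_iff)
    then have "Re (cinner (fst x) (fst x)) = 0" "Re (cinner (snd x) (snd x)) = 0"
      using cinner_self_nonneg[of "fst x"] cinner_self_nonneg[of "snd x"] by linarith+
    then have "cinner (fst x) (fst x) = 0" "cinner (snd x) (snd x) = 0"
      using cinner_self_real[of "fst x"] cinner_self_real[of "snd x"] by (simp_all add: complex_eq_iff)
    then show "x = 0" by (simp add: cinner_self_eq_zero prod_eq_iff)
  next
    assume "x = 0"
    then show "cinner x x = 0"
      using cinner_self_eq_zero[of "0::'a"] cinner_self_eq_zero[of "0::'b"]
      by (simp add: cinner_prod_def)
  qed
qed
end

instance prod :: (chilbert_space, chilbert_space) chilbert_space ..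

definition clinear :: "('a::complex_vector \<Rightarrow> 'b::complex_vector) \<Rightarrow> bool" where
  "clinear f \<longleftrightarrow> (\<forall>x y. f (x + y) = f x + f y) \<and> (\<forall>a x. f (a *\<^sub>C x) = a *\<^sub>C f x)"

definition bounded_clinear :: "('a::complex_normed_vector \<Rightarrow> 'b::complex_normed_vector) \<Rightarrow> bool" where
  "bounded_clinear f \<longleftrightarrow> clinear f \<and> (\<exists>K. \<forall>x. norm (f x) \<le> norm x * K)"

text \<open>Adjoint (exists and is unique for bounded operators between Hilbert spaces).\<close>
definition adj :: "('a::complex_inner \<Rightarrow> 'b::complex_inner) \<Rightarrow> 'b \<Rightarrow> 'a" where
  "adj S = (SOME S'. \<forall>x y. cinner (S x) y = cinner x (S' y))"

definition poly_op :: "real poly \<Rightarrow> ('a::complex_vector \<Rightarrow> 'a) \<Rightarrow> 'a \<Rightarrow> 'a" where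
  "poly_op p P v = (\<Sum>i\<le>degree p. complex_of_real (coeff p i) *\<^sub>C (P ^^ i) v)"

definition fpow :: "real \<Rightarrow> real \<Rightarrow> real" where
  "fpow t x = (if t = 0 then 1 else x powr t)"

text \<open>Continuous functional calculus: for a positive operator P (spectrum in [0, norm P]),
  P^t is the norm limit of p_n(P) for any polynomials p_n converging uniformly to x^t
  on [0, norm P].\<close>
definition op_pow :: "('a::chilbert_space \<Rightarrow> 'a) \<Rightarrow> real \<Rightarrow> 'a \<Rightarrow> 'a" where
  "op_pow P t = (THE Q. bounded_clinear Q \<and>
     (\<forall>ps :: nat \<Rightarrow> real poly.
        (\<forall>e>0. \<exists>N. \<forall>n\<ge>N. \<forall>x\<in>{0..onorm P}. \<bar>poly (ps n) x - fpow t x\<bar> < e) \<longrightarrow>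
        (\<lambda>n. onorm (\<lambda>v. poly_op (ps n) P v - Q v)) \<longlonglongrightarrow> 0))"

definition absop :: "('a::chilbert_space \<Rightarrow> 'b::chilbert_space) \<Rightarrow> 'a \<Rightarrow> 'a" where
  "absop S = op_pow (adj S \<circ> S) (1/2)"

text \<open>Numerical radius (the 0 only matters for the trivial space, where the sup is 0).\<close>
definition nrad :: "('a::complex_inner \<Rightarrow> 'a) \<Rightarrow> real" where
  "nrad S = Sup ({0} \<union> {cmod (cinner (S x) x) | x. norm x = 1})"

end

(* For a unit vector (x, y) the quadratic form of T is <By, x> + <Cx, y>. The mixed Schwarz
   inequality |<Cx, y>|^2 <= <|C|^(2a) x, x> <|C*|^(2(1-a)) y, y> and AM-GM bound it by half the
   sum of four quadratic forms. Grouping the two forms in x (and the two in y), convexity of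
   t |-> t^(2r) and the Hoelder-McCarthy inequality <P^s u, u>^p <= <P^(sp) u, u> for unit u bound
   each group by (||X||/2)^(1/(2r)) times the squared norm of x (of y), where X is the corresponding
   operator sum in the theorem.

   The operator powers are built by a continuous functional calculus: f(P) is the norm limit of
   p_n(P) for polynomials p_n converging to f uniformly on [0, ||P||]. Positivity of p(P) for p >= 0
   on [0, ||P||] comes from writing p = s0 + x s1 + (||P|| - x) s2 with sums of squares s_i. *)

theory Submission
  imports Defs "HOL-Computational_Algebra.Fundamental_Theorem_Algebra"
begin

section \<open>Complex inner product spaces\<close>

declare scaleC_one [simp] scaleC_scaleC [simp]

lemma scaleC_of_real: "complex_of_real r *\<^sub>C x = r *\<^sub>R x"
  by (simp add: scaleR_scaleC)

lemma scaleC_zero_left [simp]: "0 *\<^sub>C x = 0"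
  by (metis scaleC_of_real of_real_0 scaleR_zero_left)

lemma scaleC_zero_right [simp]: "a *\<^sub>C (0::'a::complex_vector) = 0"
  by (metis add_cancel_right_right scaleC_add_right)

lemma scaleC_minus_left: "(- a) *\<^sub>C x = - (a *\<^sub>C x)"
  by (metis add.right_neutral eq_neg_iff_add_eq_0 scaleC_add_left scaleC_zero_left add.right_inverse)

lemma scaleC_sum_right: "a *\<^sub>C (\<Sum>i\<in>I. f i) = (\<Sum>i\<in>I. a *\<^sub>C f i)"
  by (induct I rule: infinite_finite_induct) (auto simp: scaleC_add_right)

lemma cinner_add_right: "cinner x (y + z) = cinner x y + cinner x z"
  by (metis cinner_commute cinner_add_left complex_cnj_add)

lemma cinner_scaleC_right: "cinner x (a *\<^sub>C y) = a * cinner x y"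
  by (metis cinner_commute cinner_scaleC_left complex_cnj_mult complex_cnj_cnj)

lemma cinner_zero_left [simp]: "cinner 0 y = 0"
  by (metis add_cancel_left_left add.right_neutral cinner_add_left)

lemma cinner_zero_right [simp]: "cinner x 0 = 0"
  by (metis cinner_commute cinner_zero_left complex_cnj_zero)

lemma cinner_diff_left: "cinner (x - y) z = cinner x z - cinner y z"
  by (metis add_diff_cancel cinner_add_left diff_add_cancel eq_diff_eq)

lemma cinner_diff_right: "cinner x (y - z) = cinner x y - cinner x z"
  by (metis add_diff_cancel cinner_add_right diff_add_cancel eq_diff_eq)

lemma cinner_self: "cinner x x = complex_of_real ((norm x)\<^sup>2)"
  by (simp add: complex_eq_iff cinner_self_real norm_eq_sqrt_cinner cinner_self_nonneg)

lemma Re_cinner_self: "Re (cinner x x) = (norm x)\<^sup>2"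
  by (simp add: cinner_self)

lemma cinner_ext: "(\<And>z. cinner z x = cinner z y) \<Longrightarrow> x = y"
  by (metis cinner_diff_right cinner_self_eq_zero diff_self eq_iff_diff_eq_0)

lemma cmod_cinner_le: "cmod (cinner x y) \<le> norm x * norm y"
proof (cases "x = 0")
  case True then show ?thesis by simp
next
  case False
  define t where "t = cinner x y / complex_of_real ((norm x)\<^sup>2)"
  have nx: "norm x > 0" using False by simp
  have "0 \<le> Re (cinner (y - t *\<^sub>C x) (y - t *\<^sub>C x))" by (rule cinner_self_nonneg)
  also have "cinner (y - t *\<^sub>C x) (y - t *\<^sub>C x)
      = cinner y y - t * cinner y x - cnj t * cinner x y + cnj t * t * cinner x x"
    by (simp add: cinner_diff_left cinner_diff_right cinner_scaleC_left cinner_scaleC_right algebra_simps)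
  also have "\<dots> = cinner y y - cinner x y * cnj (cinner x y) / complex_of_real ((norm x)\<^sup>2)"
    using nx by (simp add: t_def cinner_self cinner_commute[of y x] field_simps power2_eq_square)
  also have "\<dots> = complex_of_real ((norm y)\<^sup>2 - (cmod (cinner x y))\<^sup>2 / (norm x)\<^sup>2)"
    by (simp add: cinner_self complex_norm_square[symmetric])
  finally have "0 \<le> (norm y)\<^sup>2 - (cmod (cinner x y))\<^sup>2 / (norm x)\<^sup>2"
    by simp
  then have "(cmod (cinner x y))\<^sup>2 \<le> (norm x * norm y)\<^sup>2"
    using nx by (simp add: field_simps power_mult_distrib)
  then show ?thesis
    by (meson mult_nonneg_nonneg norm_ge_zero power2_le_imp_le)
qed

lemma Re_cinner_le: "Re (cinner x y) \<le> norm x * norm y"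
  using complex_Re_le_cmod cmod_cinner_le order_trans by blast

lemma parallelogram_law:
  "(norm (x - y))\<^sup>2 + (norm (x + y))\<^sup>2 = 2 * (norm x)\<^sup>2 + 2 * (norm (y::'a::complex_inner))\<^sup>2"
proof -
  have "cinner (x - y) (x - y) + cinner (x + y) (x + y) = 2 * cinner x x + 2 * cinner y y"
    by (simp add: cinner_add_left cinner_add_right cinner_diff_left cinner_diff_right)
  then have "complex_of_real ((norm (x - y))\<^sup>2 + (norm (x + y))\<^sup>2)
      = complex_of_real (2 * (norm x)\<^sup>2 + 2 * (norm y)\<^sup>2)"
    by (simp add: cinner_self)
  then show ?thesis using of_real_eq_iff by blast
qed

lemma power2_norm_add:
  "(norm (x + y))\<^sup>2 = (norm x)\<^sup>2 + 2 * Re (cinner x y) + (norm (y::'a::complex_inner))\<^sup>2"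
proof -
  have "cinner (x + y) (x + y) = cinner x x + (cinner x y + cnj (cinner x y)) + cinner y y"
    by (simp add: cinner_add_left cinner_add_right cinner_commute[of y x])
  then have "Re (cinner (x + y) (x + y)) = Re (cinner x x) + 2 * Re (cinner x y) + Re (cinner y y)"
    by simp
  then show ?thesis by (simp add: Re_cinner_self)
qed


section \<open>Bounded complex-linear operators\<close>

lemma bounded_clinear_map_add: "bounded_clinear f \<Longrightarrow> f (x + y) = f x + f y"
  by (simp add: bounded_clinear_def clinear_def)

lemma bounded_clinear_map_scaleC: "bounded_clinear f \<Longrightarrow> f (a *\<^sub>C x) = a *\<^sub>C f x"
  by (simp add: bounded_clinear_def clinear_def)

lemma bounded_clinear_bounded_linear:
  assumes "bounded_clinear f" shows "bounded_linear f"
proof -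
  obtain K where K: "\<forall>x. norm (f x) \<le> norm x * K" using assms by (auto simp: bounded_clinear_def)
  show ?thesis
  proof (unfold_locales)
    show "f (x + y) = f x + f y" for x y using assms by (rule bounded_clinear_map_add)
    show "f (r *\<^sub>R x) = r *\<^sub>R f x" for r x
      using bounded_clinear_map_scaleC[OF assms, of "complex_of_real r" x] by (simp add: scaleC_of_real)
    show "\<exists>K. \<forall>x. norm (f x) \<le> norm x * K" using K by blast
  qed
qed

lemma bounded_clinear_map_zero: "bounded_clinear f \<Longrightarrow> f 0 = 0"
  by (metis bounded_clinear_bounded_linear bounded_linear.linear linear_0)

lemma bounded_clinear_map_minus: "bounded_clinear f \<Longrightarrow> f (- x) = - f x"
  by (metis bounded_clinear_bounded_linear bounded_linear.linear linear_neg)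

lemma bounded_clinear_map_diff: "bounded_clinear f \<Longrightarrow> f (x - y) = f x - f y"
  by (metis bounded_clinear_bounded_linear bounded_linear.linear linear_diff)

lemma bounded_clinear_map_sum: "bounded_clinear f \<Longrightarrow> f (\<Sum>i\<in>I. g i) = (\<Sum>i\<in>I. f (g i))"
  by (metis bounded_clinear_bounded_linear bounded_linear.linear linear_sum)

lemma bounded_clinear_onorm: "bounded_clinear f \<Longrightarrow> norm (f x) \<le> onorm f * norm x"
  by (rule onorm[OF bounded_clinear_bounded_linear])

lemma onorm_nonneg_bounded_clinear: "bounded_clinear f \<Longrightarrow> 0 \<le> onorm f"
  by (rule onorm_pos_le[OF bounded_clinear_bounded_linear])

lemma bounded_clinearI:
  assumes "\<And>x y. f (x + y) = f x + f y" "\<And>a x. f (a *\<^sub>C x) = a *\<^sub>C f x"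
    and "\<And>x. norm (f x) \<le> K * norm x"
  shows "bounded_clinear f"
  using assms unfolding bounded_clinear_def clinear_def by (metis mult.commute)

lemma bounded_clinear_ident: "bounded_clinear (\<lambda>x. x)"
  by (rule bounded_clinearI[where K=1]) auto

lemma bounded_clinear_const_zero: "bounded_clinear (\<lambda>x. 0)"
  by (rule bounded_clinearI[where K=0]) auto

lemma bounded_clinear_compose:
  assumes f: "bounded_clinear f" and g: "bounded_clinear g"
  shows "bounded_clinear (\<lambda>x. f (g x))"
proof (rule bounded_clinearI[where K="onorm f * onorm g"])
  show "f (g (x + y)) = f (g x) + f (g y)" for x y
    by (simp add: bounded_clinear_map_add[OF f] bounded_clinear_map_add[OF g])
  show "f (g (a *\<^sub>C x)) = a *\<^sub>C f (g x)" for a x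
    by (simp add: bounded_clinear_map_scaleC[OF f] bounded_clinear_map_scaleC[OF g])
  fix x
  have "norm (f (g x)) \<le> onorm f * norm (g x)" by (rule bounded_clinear_onorm[OF f])
  also have "\<dots> \<le> onorm f * (onorm g * norm x)"
    by (intro mult_left_mono bounded_clinear_onorm[OF g] onorm_nonneg_bounded_clinear[OF f])
  finally show "norm (f (g x)) \<le> onorm f * onorm g * norm x" by (simp add: mult.assoc)
qed

lemma bounded_clinear_add:
  assumes f: "bounded_clinear f" and g: "bounded_clinear g"
  shows "bounded_clinear (\<lambda>x. f x + g x)"
proof (rule bounded_clinearI[where K="onorm f + onorm g"])
  show "f (x + y) + g (x + y) = f x + g x + (f y + g y)" for x y
    by (simp add: bounded_clinear_map_add[OF f] bounded_clinear_map_add[OF g] algebra_simps)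
  show "f (a *\<^sub>C x) + g (a *\<^sub>C x) = a *\<^sub>C (f x + g x)" for a x
    by (simp add: bounded_clinear_map_scaleC[OF f] bounded_clinear_map_scaleC[OF g] scaleC_add_right)
  fix x
  have "norm (f x + g x) \<le> norm (f x) + norm (g x)" by (rule norm_triangle_ineq)
  also have "\<dots> \<le> onorm f * norm x + onorm g * norm x"
    by (intro add_mono bounded_clinear_onorm f g)
  finally show "norm (f x + g x) \<le> (onorm f + onorm g) * norm x" by (simp add: algebra_simps)
qed

lemma bounded_clinear_scaleC:
  assumes f: "bounded_clinear f"
  shows "bounded_clinear (\<lambda>x. c *\<^sub>C f x)"
proof (rule bounded_clinearI[where K="cmod c * onorm f"])
  show "c *\<^sub>C f (x + y) = c *\<^sub>C f x + c *\<^sub>C f y" for x y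
    by (simp add: bounded_clinear_map_add[OF f] scaleC_add_right)
  show "c *\<^sub>C f (a *\<^sub>C x) = a *\<^sub>C c *\<^sub>C f x" for a x
    by (simp add: bounded_clinear_map_scaleC[OF f] mult.commute)
  show "norm (c *\<^sub>C f x) \<le> cmod c * onorm f * norm x" for x
    by (simp add: bounded_clinear_onorm[OF f] mult.assoc mult_left_mono norm_scaleC)
qed

lemma bounded_clinear_diff:
  assumes "bounded_clinear f" and "bounded_clinear g"
  shows "bounded_clinear (\<lambda>x. f x - g x)"
  using bounded_clinear_add[OF assms(1) bounded_clinear_scaleC[OF assms(2), of "-1"]]
  by (simp add: scaleC_minus_left)


section \<open>The Riesz representation theorem\<close>

text \<open>Hypothesis \<open>mid\<close> says that all midpoints have norm at least \<open>d\<close>; the parallelogram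
  law then forces the terms together.\<close>

lemma minimizing_sequence_Cauchy:
  fixes xs :: "nat \<Rightarrow> 'a::complex_inner"
  assumes d: "0 \<le> d" and mid: "\<And>m n. 2 * d \<le> norm (xs m + xs n)"
    and xs: "\<And>n. (norm (xs n))\<^sup>2 < d\<^sup>2 + 1 / Suc n"
  shows "Cauchy xs"
proof (rule metric_CauchyI)
  have close: "(norm (xs m - xs n))\<^sup>2 \<le> 2 / Suc m + 2 / Suc n" for m n
  proof -
    have "(2 * d)\<^sup>2 \<le> (norm (xs m + xs n))\<^sup>2" using d mid by (intro power_mono) auto
    then show ?thesis using parallelogram_law[of "xs m" "xs n"] xs[of m] xs[of n]
      by (simp add: power_mult_distrib)
  qed
  fix e :: real assume e: "0 < e"
  obtain N :: nat where N: "4 / e\<^sup>2 < N" using reals_Archimedean2 by blast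
  have Npos: "0 < real N" using N e by (smt (verit) divide_pos_pos zero_less_power)
  show "\<exists>M. \<forall>m\<ge>M. \<forall>n\<ge>M. dist (xs m) (xs n) < e"
  proof (intro exI allI impI)
    fix m n assume m: "N \<le> m" and n: "N \<le> n"
    have "2 / Suc m \<le> 2 / N" "2 / Suc n \<le> 2 / N"
      using m n Npos by (auto intro!: divide_left_mono)
    moreover have "4 / N < e\<^sup>2" using N e Npos by (simp add: field_simps)
    ultimately have "(norm (xs m - xs n))\<^sup>2 < e\<^sup>2" using close[of m n] by linarith
    then show "dist (xs m) (xs n) < e" using e
      by (simp add: dist_norm power2_less_imp_less)
  qed
qed

context
  fixes \<phi> :: "'a::chilbert_space \<Rightarrow> complex" and K :: real
  assumes add: "\<And>x y. \<phi> (x + y) = \<phi> x + \<phi> y"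
    and hom: "\<And>a x. \<phi> (a *\<^sub>C x) = a * \<phi> x"
    and bnd: "\<And>x. cmod (\<phi> x) \<le> K * norm x"
begin

lemma functional_diff: "\<phi> (x - y) = \<phi> x - \<phi> y"
  using add[of "x - y" y] by simp

lemma functional_level_one_min_norm:
  assumes "\<phi> x1 \<noteq> 0"
  obtains x0 where "\<phi> x0 = 1" and "\<And>y. \<phi> y = 1 \<Longrightarrow> norm x0 \<le> norm y"
proof -
  define A where "A = {x. \<phi> x = 1}"
  have x1A: "(1 / \<phi> x1) *\<^sub>C x1 \<in> A" using assms by (simp add: A_def hom)
  define d where "d = Inf (norm ` A)"
  have bddA: "bdd_below (norm ` A)" by (rule bdd_belowI[of _ 0]) auto
  have dle: "d \<le> norm x" if "x \<in> A" for x
    unfolding d_def using that bddA by (simp add: cINF_lower)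
  have d0: "0 \<le> d" unfolding d_def using x1A by (intro cINF_greatest) auto
  have "\<exists>x\<in>A. (norm x)\<^sup>2 < d\<^sup>2 + 1 / Suc n" for n
  proof -
    have "Inf (norm ` A) < sqrt (d\<^sup>2 + 1 / Suc n)"
      unfolding d_def[symmetric] by (intro real_less_rsqrt) simp
    then obtain x where "x \<in> A" "norm x < sqrt (d\<^sup>2 + 1 / Suc n)"
      using x1A cInf_lessD[of "norm ` A"] by blast
    moreover from this(2) have "(norm x)\<^sup>2 < (sqrt (d\<^sup>2 + 1 / Suc n))\<^sup>2"
      by (intro power_strict_mono) auto
    ultimately show ?thesis by auto
  qed
  then obtain xs where xsA: "\<And>n. xs n \<in> A" and xsn: "\<And>n. (norm (xs n))\<^sup>2 < d\<^sup>2 + 1 / Suc n"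
    by metis
  have "2 * d \<le> norm (xs m + xs n)" for m n
  proof -
    have "(1/2) *\<^sub>C (xs m + xs n) \<in> A" using xsA[of m] xsA[of n] by (simp add: A_def hom add)
    then have "d \<le> norm ((1/2) *\<^sub>C (xs m + xs n))" by (rule dle)
    then show ?thesis by (simp add: norm_scaleC)
  qed
  then obtain x0 where lim: "xs \<longlonglongrightarrow> x0"
    using minimizing_sequence_Cauchy[OF d0 _ xsn] convergent_eq_Cauchy by blast
  have "\<phi> x0 = 1"
  proof -
    have "cmod (1 - \<phi> x0) \<le> K * norm (xs n - x0)" for n
      using bnd[of "xs n - x0"] xsA[of n] by (simp add: functional_diff A_def)
    moreover have "(\<lambda>n. K * norm (xs n - x0)) \<longlonglongrightarrow> 0"
      using lim by (metis Lim_null mult_zero_right tendsto_mult_left tendsto_norm_zero)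
    ultimately have "cmod (1 - \<phi> x0) \<le> 0"
      by (intro tendsto_le[OF trivial_limit_sequentially]) auto
    then show ?thesis by simp
  qed
  moreover have "norm x0 \<le> norm y" if "\<phi> y = 1" for y
  proof -
    have l1: "(\<lambda>n. (norm (xs n))\<^sup>2) \<longlonglongrightarrow> (norm x0)\<^sup>2"
      by (intro tendsto_intros lim)
    have l2: "(\<lambda>n. d\<^sup>2 + 1 / real (Suc n)) \<longlonglongrightarrow> d\<^sup>2 + 0"
      by (intro tendsto_intros) (rule LIMSEQ_Suc[OF lim_inverse_n'])
    have "\<forall>n. (norm (xs n))\<^sup>2 \<le> d\<^sup>2 + 1 / real (Suc n)" using xsn less_imp_le by blast
    then have "(norm x0)\<^sup>2 \<le> d\<^sup>2 + 0"
      by (intro tendsto_le[OF trivial_limit_sequentially l2 l1 always_eventually])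
    then have "norm x0 \<le> d" using d0 power2_le_imp_le[of "norm x0" d] by simp
    then show ?thesis using dle[of y] that by (simp add: A_def)
  qed
  ultimately show ?thesis using that by blast
qed

lemma min_norm_orthogonal_kernel:
  assumes phix0: "\<phi> x0 = 1" and x0min: "\<And>y. \<phi> y = 1 \<Longrightarrow> norm x0 \<le> norm y"
    and v: "\<phi> v = 0"
  shows "cinner x0 v = 0"
proof (rule ccontr)
  assume c0: "cinner x0 v \<noteq> 0"
  define c where "c = cinner x0 v"
  define s where "s = 1 / ((norm v)\<^sup>2 + 1)"
  have vp: "0 < (norm v)\<^sup>2 + 1" using zero_le_power2[of "norm v"] by linarith
  have s0: "0 < s" using vp by (simp add: s_def)
  define t where "t = - complex_of_real s * cnj c"
  have "\<phi> (x0 + t *\<^sub>C v) = 1" using phix0 v by (simp add: add hom)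
  then have "(norm x0)\<^sup>2 \<le> (norm (x0 + t *\<^sub>C v))\<^sup>2" by (simp add: x0min power_mono)
  also have "\<dots> = (norm x0)\<^sup>2 + 2 * Re (cinner x0 (t *\<^sub>C v)) + (norm (t *\<^sub>C v))\<^sup>2"
    by (rule power2_norm_add)
  also have "Re (cinner x0 (t *\<^sub>C v)) = - s * (cmod c)\<^sup>2"
  proof -
    have "cinner x0 (t *\<^sub>C v) = - complex_of_real s * (cnj c * c)"
      by (simp add: cinner_scaleC_right t_def c_def[symmetric])
    also have "cnj c * c = complex_of_real ((cmod c)\<^sup>2)"
      by (metis complex_norm_square mult.commute)
    finally show ?thesis by simp
  qed
  also have "(norm (t *\<^sub>C v))\<^sup>2 = s\<^sup>2 * (cmod c)\<^sup>2 * (norm v)\<^sup>2"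
    using s0 by (simp add: norm_scaleC t_def norm_mult power_mult_distrib)
  finally have "2 * s * (cmod c)\<^sup>2 \<le> s\<^sup>2 * (cmod c)\<^sup>2 * (norm v)\<^sup>2" by simp
  then have "2 * (cmod c)\<^sup>2 \<le> s * (norm v)\<^sup>2 * (cmod c)\<^sup>2" using s0
    by (simp add: power2_eq_square mult_ac mult_le_cancel_left_pos)
  moreover have "s * (norm v)\<^sup>2 < 1" unfolding s_def using vp by (simp add: field_simps)
  moreover have "0 < (cmod c)\<^sup>2" using c0 c_def by simp
  ultimately have "s * (norm v)\<^sup>2 * (cmod c)\<^sup>2 < 1 * (cmod c)\<^sup>2"
    by (intro mult_strict_right_mono)
  with \<open>2 * (cmod c)\<^sup>2 \<le> s * (norm v)\<^sup>2 * (cmod c)\<^sup>2\<close> \<open>0 < (cmod c)\<^sup>2\<close> show False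
    by linarith
qed

theorem riesz_representation: "\<exists>z. \<forall>x. \<phi> x = cinner z x"
proof (cases "\<forall>x. \<phi> x = 0")
  case True then show ?thesis by (intro exI[of _ 0]) simp
next
  case False
  then obtain x1 where "\<phi> x1 \<noteq> 0" by blast
  then obtain x0 where phix0: "\<phi> x0 = 1" and x0min: "\<And>y. \<phi> y = 1 \<Longrightarrow> norm x0 \<le> norm y"
    using functional_level_one_min_norm by blast
  have x0nz: "x0 \<noteq> 0" using phix0 hom[of 0 0] by auto
  have key: "cinner x0 x = \<phi> x * complex_of_real ((norm x0)\<^sup>2)" for x
  proof -
    have "\<phi> (x - \<phi> x *\<^sub>C x0) = 0" by (simp add: functional_diff hom phix0)
    then have "cinner x0 (x - \<phi> x *\<^sub>C x0) = 0" using min_norm_orthogonal_kernel phix0 x0min by blast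
    then show ?thesis by (simp add: cinner_diff_right cinner_scaleC_right cinner_self)
  qed
  show ?thesis
    using x0nz by (intro exI[of _ "complex_of_real (1 / (norm x0)\<^sup>2) *\<^sub>C x0"])
      (simp add: cinner_scaleC_left key)
qed

end


section \<open>Adjoints and positive operators\<close>

lemma adj_exists:
  fixes S :: "'a::chilbert_space \<Rightarrow> 'b::chilbert_space"
  assumes S: "bounded_clinear S"
  shows "\<exists>S'. \<forall>x y. cinner (S x) y = cinner x (S' y)"
proof -
  have "\<exists>z. \<forall>x. cinner y (S x) = cinner z x" for y
  proof (rule riesz_representation[of _ "norm y * onorm S"])
    show "cinner y (S (x1 + x2)) = cinner y (S x1) + cinner y (S x2)" for x1 x2
      by (simp add: bounded_clinear_map_add[OF S] cinner_add_right)
    show "cinner y (S (a *\<^sub>C x)) = a * cinner y (S x)" for a x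
      by (simp add: bounded_clinear_map_scaleC[OF S] cinner_scaleC_right)
    show "cmod (cinner y (S x)) \<le> norm y * onorm S * norm x" for x
    proof -
      have "cmod (cinner y (S x)) \<le> norm y * norm (S x)" by (rule cmod_cinner_le)
      also have "\<dots> \<le> norm y * (onorm S * norm x)"
        by (intro mult_left_mono bounded_clinear_onorm[OF S]) auto
      finally show ?thesis by (simp add: mult.assoc)
    qed
  qed
  then show ?thesis by (metis cinner_commute)
qed

lemma cinner_adj_right:
  fixes S :: "'a::chilbert_space \<Rightarrow> 'b::chilbert_space"
  assumes "bounded_clinear S"
  shows "cinner (S x) y = cinner x (adj S y)"
  using someI_ex[OF adj_exists[OF assms]] unfolding adj_def by blast

lemma cinner_adj_left:
  fixes S :: "'a::chilbert_space \<Rightarrow> 'b::chilbert_space"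
  assumes "bounded_clinear S"
  shows "cinner (adj S y) x = cinner y (S x)"
  by (metis cinner_adj_right assms cinner_commute)

lemma bounded_clinear_adj:
  fixes S :: "'a::chilbert_space \<Rightarrow> 'b::chilbert_space"
  assumes S: "bounded_clinear S"
  shows "bounded_clinear (adj S)"
proof (rule bounded_clinearI[where K="onorm S"])
  show "adj S (x + y) = adj S x + adj S y" for x y
    by (rule cinner_ext) (simp add: cinner_adj_right[OF S, symmetric] cinner_add_right)
  show "adj S (a *\<^sub>C x) = a *\<^sub>C adj S x" for a x
    by (rule cinner_ext) (simp add: cinner_adj_right[OF S, symmetric] cinner_scaleC_right)
  fix y
  have "(norm (adj S y))\<^sup>2 = Re (cinner (S (adj S y)) y)"
    by (simp add: cinner_adj_right[OF S] Re_cinner_self)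
  also have "\<dots> \<le> norm (S (adj S y)) * norm y" by (rule Re_cinner_le)
  also have "\<dots> \<le> onorm S * norm (adj S y) * norm y"
    by (intro mult_right_mono bounded_clinear_onorm[OF S]) auto
  finally have "norm (adj S y) * norm (adj S y) \<le> (onorm S * norm y) * norm (adj S y)"
    by (simp add: power2_eq_square algebra_simps)
  then show "norm (adj S y) \<le> onorm S * norm y"
    using onorm_nonneg_bounded_clinear[OF S]
    by (cases "norm (adj S y) = 0") (auto simp: mult_le_cancel_right)
qed

lemma adj_adj:
  fixes S :: "'a::chilbert_space \<Rightarrow> 'b::chilbert_space"
  assumes S: "bounded_clinear S"
  shows "adj (adj S) = S"
proof
  show "adj (adj S) x = S x" for x
    by (rule cinner_ext)
      (simp add: cinner_adj_right[OF bounded_clinear_adj[OF S], symmetric] cinner_adj_left[OF S])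
qed

definition positive_op :: "('a::complex_inner \<Rightarrow> 'a) \<Rightarrow> bool" where
  "positive_op P \<longleftrightarrow> bounded_clinear P \<and> (\<forall>x y. cinner (P x) y = cinner x (P y))
     \<and> (\<forall>x. 0 \<le> Re (cinner (P x) x))"

lemma positive_op_bounded_clinear: "positive_op P \<Longrightarrow> bounded_clinear P"
  by (simp add: positive_op_def)

lemma positive_op_selfadjoint: "positive_op P \<Longrightarrow> cinner (P x) y = cinner x (P y)"
  by (simp add: positive_op_def)

lemma positive_op_nonneg: "positive_op P \<Longrightarrow> 0 \<le> Re (cinner (P x) x)"
  unfolding positive_op_def by blast

lemma positive_op_adj_comp:
  fixes S :: "'a::chilbert_space \<Rightarrow> 'b::chilbert_space"
  assumes S: "bounded_clinear S"
  shows "positive_op (adj S \<circ> S)"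
  unfolding positive_op_def comp_def
    cinner_adj_left[OF S] cinner_adj_right[OF S, symmetric]
  by (simp add: bounded_clinear_compose[OF bounded_clinear_adj[OF S] S] cinner_self_nonneg)

lemma positive_op_comp_adj:
  fixes S :: "'a::chilbert_space \<Rightarrow> 'b::chilbert_space"
  assumes S: "bounded_clinear S"
  shows "positive_op (S \<circ> adj S)"
  using positive_op_adj_comp[OF bounded_clinear_adj[OF S]] by (simp add: adj_adj[OF S])

lemma positive_op_le_onorm:
  assumes "positive_op P"
  shows "Re (cinner (P u) u) \<le> onorm P * (norm u)\<^sup>2"
proof -
  have "Re (cinner (P u) u) \<le> norm (P u) * norm u" by (rule Re_cinner_le)
  also have "\<dots> \<le> (onorm P * norm u) * norm u"
    by (intro mult_right_mono bounded_clinear_onorm positive_op_bounded_clinear assms) auto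
  finally show ?thesis by (simp add: power2_eq_square mult.assoc)
qed


section \<open>Polynomials nonnegative on an interval\<close>

inductive sos :: "real poly \<Rightarrow> bool" where
  sos_square: "sos (s * s)"
| sos_add: "sos p \<Longrightarrow> sos q \<Longrightarrow> sos (p + q)"

lemma sos_mult: "sos p \<Longrightarrow> sos q \<Longrightarrow> sos (p * q)"
proof (induct p rule: sos.induct)
  case (sos_square s)
  from sos_square show ?case
  proof (induct q rule: sos.induct)
    case (sos_square t)
    have "s * s * (t * t) = (s * t) * (s * t)" by (simp add: algebra_simps)
    then show ?case by (metis sos.sos_square)
  next
    case (sos_add p q)
    then show ?case by (simp add: distrib_left sos.sos_add)
  qed
next
  case (sos_add p1 p2) then show ?case by (simp add: distrib_right sos.sos_add)
qed

lemma sos_smult: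
  assumes c: "0 \<le> c" shows "sos p \<Longrightarrow> sos (smult c p)"
proof (induct p rule: sos.induct)
  case (sos_square s)
  have "smult c (s * s) = smult (sqrt c) s * smult (sqrt c) s"
    using c by simp
  then show ?case by (metis sos.sos_square)
next
  case (sos_add p q) then show ?case by (simp add: smult_add_right sos.sos_add)
qed

lemma sos_const: "0 \<le> c \<Longrightarrow> sos [:c:]"
  using sos_smult[OF _ sos_square[of 1]] by simp

text \<open>\<open>qmod L\<close> is the quadratic module of \<open>[0, L]\<close>: polynomials \<open>\<sigma>\<^sub>0 + x \<sigma>\<^sub>1 + (L - x) \<sigma>\<^sub>2\<close>
  with sums of squares \<open>\<sigma>\<^sub>i\<close>. Its members are visibly nonnegative on \<open>[0, L]\<close>, and
  \<open>qmod_of_nonneg\<close> proves the converse; substituting a positive operator \<open>P\<close> with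
  \<open>\<parallel>P\<parallel> \<le> L\<close> for \<open>x\<close> preserves the certificate, which is how positivity of polynomials
  transfers to operators.\<close>

definition qmod :: "real \<Rightarrow> real poly \<Rightarrow> bool" where
  "qmod L p \<longleftrightarrow> (\<exists>a b c. sos a \<and> sos b \<and> sos c \<and> p = a + [:0,1:] * b + [:L,-1:] * c)"

lemma qmod_sos: "sos a \<Longrightarrow> qmod L a"
  unfolding qmod_def by (rule exI[of _ a], rule exI[of _ 0], rule exI[of _ 0])
    (simp add: sos_const[of 0, simplified])

lemma qmod_add:
  assumes "qmod L p" "qmod L q" shows "qmod L (p + q)"
proof -
  obtain a b c a' b' c' where "sos a" "sos b" "sos c" "p = a + [:0, 1:] * b + [:L, - 1:] * c"
    "sos a'" "sos b'" "sos c'" "q = a' + [:0, 1:] * b' + [:L, - 1:] * c'"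
    using assms unfolding qmod_def by blast
  moreover from this have
    "p + q = (a + a') + [:0, 1:] * (b + b') + [:L, - 1:] * (c + c')"
    by (simp add: algebra_simps smult_add_right)
  ultimately show ?thesis unfolding qmod_def by (meson sos_add)
qed

lemma qmod_mult_sos:
  assumes "sos s" "qmod L p" shows "qmod L (s * p)"
proof -
  obtain a b c where "sos a" "sos b" "sos c" "p = a + [:0, 1:] * b + [:L, - 1:] * c"
    using assms(2) unfolding qmod_def by blast
  moreover from this have "s * p = (s * a) + [:0, 1:] * (s * b) + [:L, - 1:] * (s * c)"
    by (simp add: algebra_simps)
  ultimately show ?thesis unfolding qmod_def by (meson assms(1) sos_mult)
qed

lemma qmod_smult: "0 \<le> c \<Longrightarrow> qmod L p \<Longrightarrow> qmod L (smult c p)"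
  using qmod_mult_sos[OF sos_const, of c L p] by simp

lemma poly_eqI_eval:
  fixes p q :: "real poly"
  assumes "\<And>x. poly p x = poly q x" shows "p = q"
  using assms poly_eq_poly_eq_iff by blast

text \<open>Multiplying by \<open>x\<close> or by \<open>L - x\<close> stays in \<open>qmod L\<close> thanks to
  \<open>L x (L - x) = x\<^sup>2 (L - x) + (L - x)\<^sup>2 x\<close>.\<close>

lemma qmod_mult_X:
  assumes L: "0 < L" and p: "qmod L p"
  shows "qmod L ([:0,1:] * p)"
proof -
  obtain a b c where abc: "sos a" "sos b" "sos c" and pe: "p = a + [:0, 1:] * b + [:L, - 1:] * c"
    using p unfolding qmod_def by blast
  have "[:0,1:] * p = [:0,1:] * [:0,1:] * b
      + [:0,1:] * (a + smult (1/L) ([:L,-1:] * [:L,-1:] * c))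
      + [:L,-1:] * smult (1/L) ([:0,1:] * [:0,1:] * c)"
    unfolding pe using L by (intro poly_eqI_eval) (simp add: field_simps)
  moreover have "0 \<le> 1 / L" using L by simp
  then have "sos ([:0,1:] * [:0,1:] * b)" "sos (a + smult (1/L) ([:L,-1:] * [:L,-1:] * c))"
    "sos (smult (1/L) ([:0,1:] * [:0,1:] * c))"
    using abc by (meson sos_add sos_mult sos_smult sos_square)+
  ultimately show ?thesis unfolding qmod_def by blast
qed

lemma qmod_mult_L_minus_X:
  assumes L: "0 < L" and p: "qmod L p"
  shows "qmod L ([:L,-1:] * p)"
proof -
  obtain a b c where abc: "sos a" "sos b" "sos c" and pe: "p = a + [:0, 1:] * b + [:L, - 1:] * c"
    using p unfolding qmod_def by blast
  have "[:L,-1:] * p = [:L,-1:] * [:L,-1:] * c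
      + [:0,1:] * smult (1/L) ([:L,-1:] * [:L,-1:] * b)
      + [:L,-1:] * (a + smult (1/L) ([:0,1:] * [:0,1:] * b))"
    unfolding pe using L by (intro poly_eqI_eval) (simp add: field_simps)
  moreover have "0 \<le> 1 / L" using L by simp
  then have "sos ([:L,-1:] * [:L,-1:] * c)" "sos (smult (1/L) ([:L,-1:] * [:L,-1:] * b))"
    "sos (a + smult (1/L) ([:0,1:] * [:0,1:] * b))"
    using abc by (meson sos_add sos_mult sos_smult sos_square)+
  ultimately show ?thesis unfolding qmod_def by blast
qed

lemma qmod_mult_linear_left:
  assumes "0 < L" "r \<le> 0" "qmod L q"
  shows "qmod L ([:-r,1:] * q)"
proof -
  have "[:-r,1:] * q = [:0,1:] * q + smult (-r) q"
    by (intro poly_eqI_eval) (simp add: algebra_simps)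
  moreover have "qmod L ([:0,1:] * q + smult (-r) q)"
    using assms by (intro qmod_add qmod_mult_X qmod_smult) auto
  ultimately show ?thesis by simp
qed

lemma qmod_mult_linear_right:
  assumes "0 < L" "L \<le> r" "qmod L q"
  shows "qmod L ([:r,-1:] * q)"
proof -
  have "[:r,-1:] * q = [:L,-1:] * q + smult (r - L) q"
    by (intro poly_eqI_eval) (simp add: algebra_simps)
  moreover have "qmod L ([:L,-1:] * q + smult (r - L) q)"
    using assms by (intro qmod_add qmod_mult_L_minus_X qmod_smult) auto
  ultimately show ?thesis by metis
qed

lemma poly_nonneg_closed_interval:
  fixes q :: "real poly"
  assumes "a < b" and "\<And>y. a < y \<Longrightarrow> y < b \<Longrightarrow> 0 \<le> poly q y" and "a \<le> x" "x \<le> b"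
  shows "0 \<le> poly q x"
  by (rule continuous_ge_on_closure[where S="{a<..<b}" and f="poly q"])
    (use assms in \<open>auto intro!: continuous_on_poly continuous_on_id\<close>)

lemma poly_map_of_real_pCons:
  "poly (map_poly complex_of_real (pCons a p)) z = complex_of_real a + z * poly (map_poly of_real p) z"
  by (simp add: map_poly_pCons)

lemma poly_map_of_real_of_real:
  "poly (map_poly complex_of_real p) (complex_of_real x) = complex_of_real (poly p x)"
  by (induct p) (simp_all add: poly_map_of_real_pCons)

lemma poly_map_of_real_add:
  "poly (map_poly complex_of_real (p + q)) z = poly (map_poly of_real p) z + poly (map_poly of_real q) z"
proof (induct p arbitrary: q)
  case (pCons a p)
  obtain b q' where "q = pCons b q'" by (cases q)
  then show ?case using pCons(2)[of q'] by (simp add: poly_map_of_real_pCons algebra_simps)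
qed simp

lemma poly_map_of_real_mult:
  "poly (map_poly complex_of_real (p * q)) z = poly (map_poly of_real p) z * poly (map_poly of_real q) z"
proof (induct p)
  case (pCons a p)
  have "pCons a p * q = smult a q + pCons 0 (p * q)" by simp
  then show ?case
    using pCons by (simp add: poly_map_of_real_add map_poly_smult poly_map_of_real_pCons algebra_simps)
qed simp

lemma real_poly_complex_root:
  assumes "0 < degree p" obtains z where "poly (map_poly complex_of_real p) z = 0"
proof -
  have "degree (map_poly complex_of_real p) = degree p" by (rule degree_map_poly) simp
  then have "\<not> constant (poly (map_poly complex_of_real p))"
    using assms constant_degree[of "map_poly complex_of_real p"] by simp
  then show ?thesis using fundamental_theorem_of_algebra that by blast
qed

text \<open>A non-real root \<open>z\<close> of a real polynomial comes with the real quadratic factor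
  \<open>(x - z)(x - cnj z)\<close>, a sum of two squares.\<close>

lemma real_quadratic_factor:
  assumes z: "poly (map_poly complex_of_real p) z = 0" and im: "Im z \<noteq> 0"
  defines "Q \<equiv> [:(Re z)\<^sup>2 + (Im z)\<^sup>2, - 2 * Re z, 1:]"
  shows "p = Q * (p div Q)"
proof -
  have Q0: "Q \<noteq> 0" by (simp add: Q_def)
  have cQ: "poly (map_poly complex_of_real Q) z = 0"
    by (simp add: Q_def poly_map_of_real_pCons complex_eq_iff power2_eq_square algebra_simps)
  define r where "r = p mod Q"
  have pe: "p = p div Q * Q + r" by (simp add: r_def)
  have rz: "poly (map_poly complex_of_real r) z = 0"
    using z cQ pe by (metis add_cancel_right_left poly_map_of_real_add poly_map_of_real_mult mult_zero_right)
  have "degree r \<le> 1" using degree_mod_less[OF Q0, of p] by (auto simp: r_def Q_def)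
  then have r01: "r = [:coeff r 0, coeff r 1:]"
    by (intro poly_eqI) (auto simp: coeff_pCons coeff_eq_0 split: nat.splits)
  have "complex_of_real (coeff r 0) + z * complex_of_real (coeff r 1) = 0"
    using rz by (subst (asm) r01) (simp add: poly_map_of_real_pCons)
  then have "coeff r 1 = 0" "coeff r 0 = 0"
    using im by (auto simp: complex_eq_iff)
  then have "r = 0" by (subst r01) simp
  then show ?thesis using pe by (simp add: mult.commute)
qed

lemma interior_root_of_nonneg_is_double:
  fixes q :: "real poly"
  assumes r: "0 < r" "r < L" and nn: "\<And>x. 0 \<le> x \<Longrightarrow> x \<le> L \<Longrightarrow> 0 \<le> (x - r) * poly q x"
  shows "poly q r = 0"
proof -
  have "0 \<le> poly q r"
  proof (rule poly_nonneg_closed_interval[of r L])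
    fix y assume "r < y" "y < L"
    then show "0 \<le> poly q y" using nn[of y] r by (simp add: zero_le_mult_iff)
  qed (use r in auto)
  moreover have "0 \<le> poly (- q) r"
  proof (rule poly_nonneg_closed_interval[of 0 r])
    fix y assume "0 < y" "y < r"
    then show "0 \<le> poly (- q) y" using nn[of y] r by (simp add: zero_le_mult_iff)
  qed (use r in auto)
  ultimately show ?thesis by simp
qed

lemma nonneg_of_square_factor:
  fixes q :: "real poly"
  assumes r: "0 < r" "r < L" and nn: "\<And>x. 0 \<le> x \<Longrightarrow> x \<le> L \<Longrightarrow> 0 \<le> (x - r)\<^sup>2 * poly q x"
    and x: "0 \<le> x" "x \<le> L"
  shows "0 \<le> poly q x"
proof -
  have qr: "0 \<le> poly q r"
  proof (rule poly_nonneg_closed_interval[of r L])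
    fix y assume "r < y" "y < L"
    then show "0 \<le> poly q y" using nn[of y] r by (simp add: zero_le_mult_iff)
  qed (use r in auto)
  show ?thesis
  proof (rule poly_nonneg_closed_interval[of 0 L])
    fix y assume y: "0 < y" "y < L"
    show "0 \<le> poly q y"
    proof (cases "y = r")
      case False
      then have "0 < (y - r)\<^sup>2" by simp
      then show ?thesis using nn[of y] y by (simp add: zero_le_mult_iff)
    qed (use qr in simp)
  qed (use r x in auto)
qed

context
  fixes L :: real and p :: "real poly"
  assumes L: "0 < L" and nn: "\<And>x. 0 \<le> x \<Longrightarrow> x \<le> L \<Longrightarrow> 0 \<le> poly p x"
    and IH: "\<And>q. degree q < degree p \<Longrightarrow> (\<And>x. 0 \<le> x \<Longrightarrow> x \<le> L \<Longrightarrow> 0 \<le> poly q x) \<Longrightarrow> qmod L q"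
begin

lemma qmod_of_nonneg_real_root:
  assumes p: "p = [:-r, 1:] * q" and q0: "q \<noteq> 0"
  shows "qmod L p"
proof -
  have "degree ([:-r, 1:] * q) = degree [:-r, 1:] + degree q"
    using q0 by (intro degree_mult_eq) auto
  then have dq: "degree q < degree p" using p by simp
  have pq: "poly p x = (x - r) * poly q x" for x by (simp add: p algebra_simps)
  consider "r \<le> 0" | "L \<le> r" | "0 < r" "r < L" by linarith
  then show ?thesis
  proof cases
    case 1
    have "0 \<le> poly q x" if "0 \<le> x" "x \<le> L" for x
    proof (rule poly_nonneg_closed_interval[OF L _ that])
      fix y assume "0 < y" "y < L"
      then show "0 \<le> poly q y" using nn[of y] pq[of y] 1 by (simp add: zero_le_mult_iff)
    qed
    then show ?thesis using IH[OF dq] qmod_mult_linear_left[OF L 1] p by simp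
  next
    case 2
    have "0 \<le> poly (- q) x" if "0 \<le> x" "x \<le> L" for x
    proof (rule poly_nonneg_closed_interval[OF L _ that])
      fix y assume "0 < y" "y < L"
      then show "0 \<le> poly (- q) y" using nn[of y] pq[of y] 2 by (simp add: zero_le_mult_iff)
    qed
    moreover have "degree (- q) < degree p" using dq by simp
    moreover have "p = [:r,-1:] * (- q)" by (simp add: p)
    ultimately show ?thesis using IH qmod_mult_linear_right[OF L 2] by metis
  next
    case 3
    have "poly q r = 0"
      using 3 by (rule interior_root_of_nonneg_is_double) (simp add: nn flip: pq)
    then obtain q2 where q2: "q = [:-r, 1:] * q2" using poly_eq_0_iff_dvd by blast
    have "degree ([:-r, 1:] * q2) = degree [:-r, 1:] + degree q2"
      using q0 q2 by (intro degree_mult_eq) auto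
    then have dq2: "degree q2 < degree p" using dq q2 by simp
    have pq2: "poly p x = (x - r)\<^sup>2 * poly q2 x" for x
      by (simp add: p q2 power2_eq_square algebra_simps)
    have "0 \<le> poly q2 x" if "0 \<le> x" "x \<le> L" for x
      using 3 _ that by (rule nonneg_of_square_factor) (simp add: nn flip: pq2)
    moreover have "p = ([:-r, 1:] * [:-r, 1:]) * q2" by (simp only: p q2 mult.assoc)
    ultimately show ?thesis using IH[OF dq2] qmod_mult_sos[OF sos_square] by metis
  qed
qed

lemma qmod_of_nonneg_nonreal_root:
  assumes z: "poly (map_poly complex_of_real p) z = 0" and im: "Im z \<noteq> 0" and p0: "p \<noteq> 0"
  shows "qmod L p"
proof -
  define Q where "Q = [:(Re z)\<^sup>2 + (Im z)\<^sup>2, - 2 * Re z, 1:]"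
  define s where "s = p div Q"
  have pe: "p = Q * s" using real_quadratic_factor[OF z im] by (simp add: Q_def s_def)
  have "Q = [:- Re z, 1:] * [:- Re z, 1:] + [:Im z:] * [:Im z:]"
    by (simp add: Q_def power2_eq_square)
  then have "sos Q" by (metis sos_add sos_square)
  have Qpos: "0 < poly Q x" for x
  proof -
    have "poly Q x = (x - Re z)\<^sup>2 + (Im z)\<^sup>2" by (simp add: Q_def power2_eq_square algebra_simps)
    then show ?thesis using im by (simp add: add_nonneg_pos)
  qed
  have "degree (Q * s) = degree Q + degree s"
    using pe p0 by (intro degree_mult_eq) auto
  then have "degree s < degree p" using pe by (simp add: Q_def)
  moreover have "0 \<le> poly s x" if "0 \<le> x" "x \<le> L" for x
    using nn[OF that] Qpos[of x] pe by (simp add: zero_le_mult_iff)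
  ultimately have "qmod L s" by (rule IH)
  then show ?thesis using pe qmod_mult_sos[OF \<open>sos Q\<close>] by simp
qed

end

lemma qmod_of_nonneg:
  assumes L: "0 < L" and "\<And>x. 0 \<le> x \<Longrightarrow> x \<le> L \<Longrightarrow> 0 \<le> poly p x"
  shows "qmod L p"
  using assms(2)
proof (induct "degree p" arbitrary: p rule: less_induct)
  case less
  show ?case
  proof (cases "degree p = 0")
    case True
    then obtain c where "p = [:c:]" by (metis degree_eq_zeroE)
    then show ?thesis using less.prems[of 0] L by (simp add: qmod_sos sos_const)
  next
    case False
    then have p0: "p \<noteq> 0" by auto
    obtain z where z: "poly (map_poly complex_of_real p) z = 0"
      using False real_poly_complex_root by blast
    show ?thesis
    proof (cases "Im z = 0")
      case False
      from L less.prems less.hyps z False p0 show ?thesis by (rule qmod_of_nonneg_nonreal_root)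
    next
      case True
      then have "poly p (Re z) = 0"
        using z poly_map_of_real_of_real[of p "Re z"] by (simp add: complex_is_Real_iff)
      then obtain q where q: "p = [:- Re z, 1:] * q" using poly_eq_0_iff_dvd by blast
      then have "q \<noteq> 0" using p0 by auto
      from L less.prems less.hyps q this show ?thesis by (rule qmod_of_nonneg_real_root)
    qed
  qed
qed


section \<open>Polynomials in an operator\<close>

lemma poly_op_upto:
  assumes "degree p < N"
  shows "poly_op p P v = (\<Sum>i<N. complex_of_real (coeff p i) *\<^sub>C (P ^^ i) v)"
  unfolding poly_op_def using assms
  by (intro sum.mono_neutral_left) (auto simp: coeff_eq_0)

lemma poly_op_pCons:
  assumes P: "bounded_clinear P"
  shows "poly_op (pCons a p) P v = complex_of_real a *\<^sub>C v + P (poly_op p P v)"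
proof -
  define N where "N = Suc (degree p)"
  have d1: "degree (pCons a p) < Suc N" unfolding N_def
    by (metis degree_pCons_le le_imp_less_Suc)
  have d2: "degree p < N" by (simp add: N_def)
  have "poly_op (pCons a p) P v = (\<Sum>i<Suc N. complex_of_real (coeff (pCons a p) i) *\<^sub>C (P ^^ i) v)"
    by (rule poly_op_upto[OF d1])
  also have "\<dots> = complex_of_real a *\<^sub>C v + (\<Sum>i<N. complex_of_real (coeff p i) *\<^sub>C (P ^^ Suc i) v)"
    by (simp only: sum.lessThan_Suc_shift) simp
  also have "(\<Sum>i<N. complex_of_real (coeff p i) *\<^sub>C (P ^^ Suc i) v) = P (poly_op p P v)"
    by (simp add: poly_op_upto[OF d2] bounded_clinear_map_sum[OF P] bounded_clinear_map_scaleC[OF P])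
  finally show ?thesis .
qed

lemma poly_op_0 [simp]: "poly_op 0 P v = 0"
  by (simp add: poly_op_def)

lemma poly_op_const: "poly_op [:c:] P v = complex_of_real c *\<^sub>C v"
  by (simp add: poly_op_def)

lemma poly_op_one: "poly_op 1 P v = v"
  by (simp add: poly_op_def)

lemma poly_op_X:
  assumes P: "bounded_clinear P"
  shows "poly_op [:0, 1:] P v = P v"
  by (simp add: poly_op_pCons[OF P] poly_op_const bounded_clinear_map_zero[OF P])

lemma poly_op_add: "poly_op (p + q) P v = poly_op p P v + poly_op q P v"
proof -
  define N where "N = Suc (degree p + degree q)"
  have "degree (p + q) < N" "degree p < N" "degree q < N"
    using degree_add_le_max[of p q] by (auto simp: N_def)
  then show ?thesis
    by (simp add: poly_op_upto[of _ N] sum.distrib scaleC_add_left)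
qed

lemma poly_op_smult: "poly_op (smult c p) P v = complex_of_real c *\<^sub>C poly_op p P v"
proof -
  define N where "N = Suc (degree p)"
  have "degree (smult c p) < N" "degree p < N" by (auto simp: N_def le_imp_less_Suc)
  then show ?thesis
    by (simp add: poly_op_upto[of _ N] scaleC_sum_right)
qed

lemma poly_op_diff: "poly_op (p - q) P v = poly_op p P v - poly_op q P v"
  using poly_op_add[of "p - q" q P v] by (simp add: eq_diff_eq)

lemma bounded_clinear_poly_op:
  assumes P: "bounded_clinear P"
  shows "bounded_clinear (poly_op p P)"
proof (induct p)
  case 0 then show ?case by (simp add: bounded_clinear_const_zero)
next
  case (pCons a p)
  have "bounded_clinear (\<lambda>v. complex_of_real a *\<^sub>C v + P (poly_op p P v))"
    by (rule bounded_clinear_add[OF bounded_clinear_scaleC[OF bounded_clinear_ident]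
          bounded_clinear_compose[OF P pCons(2)]])
  then show ?case by (simp add: poly_op_pCons[OF P] fun_eq_iff)
qed

lemma poly_op_mult:
  assumes P: "bounded_clinear P"
  shows "poly_op (p * q) P v = poly_op p P (poly_op q P v)"
proof (induct p arbitrary: v)
  case 0 then show ?case by simp
next
  case (pCons a p)
  have "pCons a p * q = smult a q + pCons 0 (p * q)" by simp
  then show ?case
    by (simp add: poly_op_add poly_op_smult poly_op_pCons[OF P] pCons(2))
qed

lemma poly_op_commute_op:
  assumes P: "bounded_clinear P"
  shows "poly_op p P (P v) = P (poly_op p P v)"
  using poly_op_mult[OF P, of p "[:0,1:]" v] poly_op_mult[OF P, of "[:0,1:]" p v]
  by (simp add: poly_op_X[OF P] mult.commute)

lemma poly_op_selfadjoint:
  assumes P: "positive_op P"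
  shows "cinner (poly_op p P x) y = cinner x (poly_op p P y)"
proof (induct p arbitrary: x y)
  case 0 then show ?case by simp
next
  case (pCons a p)
  have B: "bounded_clinear P" using P by (rule positive_op_bounded_clinear)
  have "cinner (poly_op (pCons a p) P x) y
      = complex_of_real a * cinner x y + cinner (poly_op p P x) (P y)"
    by (simp add: poly_op_pCons[OF B] cinner_add_left cinner_scaleC_left positive_op_selfadjoint[OF P])
  also have "\<dots> = complex_of_real a * cinner x y + cinner x (P (poly_op p P y))"
    by (simp add: pCons(2) poly_op_commute_op[OF B])
  also have "\<dots> = cinner x (poly_op (pCons a p) P y)"
    by (simp add: poly_op_pCons[OF B] cinner_add_right cinner_scaleC_right)
  finally show ?case .
qed

lemma sos_poly_op_nonneg:
  assumes P: "positive_op P" and w: "\<And>u. 0 \<le> Re (cinner (poly_op w P u) u)"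
  shows "sos a \<Longrightarrow> 0 \<le> Re (cinner (poly_op (w * a) P v) v)"
proof (induct a arbitrary: v rule: sos.induct)
  case (sos_square s)
  have B: "bounded_clinear P" using P by (rule positive_op_bounded_clinear)
  have "w * (s * s) = s * (w * s)" by (simp add: algebra_simps)
  then have "poly_op (w * (s * s)) P v = poly_op s P (poly_op w P (poly_op s P v))"
    by (simp only: poly_op_mult[OF B])
  then have "cinner (poly_op (w * (s * s)) P v) v
      = cinner (poly_op w P (poly_op s P v)) (poly_op s P v)"
    by (simp add: poly_op_selfadjoint[OF P])
  then show ?case using w by simp
next
  case (sos_add p q)
  then show ?case by (simp add: distrib_left poly_op_add cinner_add_left)
qed

lemma qmod_poly_op_nonneg:
  assumes P: "positive_op P" and L: "onorm P \<le> L" and c: "qmod L p"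
  shows "0 \<le> Re (cinner (poly_op p P v) v)"
proof -
  have B: "bounded_clinear P" using P by (rule positive_op_bounded_clinear)
  obtain a b c where abc: "sos a" "sos b" "sos c" and pe: "p = a + [:0, 1:] * b + [:L, - 1:] * c"
    using c unfolding qmod_def by blast
  have "0 \<le> Re (cinner (poly_op 1 P u) u)" for u
    by (simp add: poly_op_one cinner_self_nonneg)
  moreover have "0 \<le> Re (cinner (poly_op [:0,1:] P u) u)" for u
    by (simp add: poly_op_X[OF B] positive_op_nonneg[OF P])
  moreover have "0 \<le> Re (cinner (poly_op [:L,-1:] P u) u)" for u
  proof -
    have "poly_op [:L,-1:] P u = complex_of_real L *\<^sub>C u - P u"
      by (simp add: poly_op_pCons[OF B] poly_op_const bounded_clinear_map_minus[OF B]
          bounded_clinear_map_zero[OF B] scaleC_minus_left)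
    then have "Re (cinner (poly_op [:L,-1:] P u) u) = L * (norm u)\<^sup>2 - Re (cinner (P u) u)"
      by (simp add: cinner_diff_left cinner_scaleC_left Re_cinner_self)
    moreover have "onorm P * (norm u)\<^sup>2 \<le> L * (norm u)\<^sup>2" using L by (simp add: mult_right_mono)
    ultimately show ?thesis using positive_op_le_onorm[OF P, of u] by simp
  qed
  ultimately have "0 \<le> Re (cinner (poly_op (1 * a) P v) v)"
    "0 \<le> Re (cinner (poly_op ([:0,1:] * b) P v) v)"
    "0 \<le> Re (cinner (poly_op ([:L,-1:] * c) P v) v)"
    using sos_poly_op_nonneg[OF P] abc by blast+
  then show ?thesis by (simp add: pe poly_op_add cinner_add_left)
qed

lemma poly_op_nonneg:
  assumes P: "positive_op P" and nn: "\<And>x. 0 \<le> x \<Longrightarrow> x \<le> onorm P \<Longrightarrow> 0 \<le> poly p x"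
  shows "0 \<le> Re (cinner (poly_op p P v) v)"
proof (cases "onorm P = 0")
  case True
  have B: "bounded_clinear P" using P by (rule positive_op_bounded_clinear)
  then have "P x = 0" for x
    using True onorm_eq_0[OF bounded_clinear_bounded_linear[OF B]] by simp
  then have "poly_op q P v = complex_of_real (poly q 0) *\<^sub>C v" for q
    by (induct q) (simp_all add: poly_op_pCons[OF B])
  then show ?thesis using nn[of 0] True by (simp add: cinner_scaleC_left cinner_self)
next
  case False
  then have L: "0 < onorm P"
    using onorm_nonneg_bounded_clinear[OF positive_op_bounded_clinear[OF P]] by simp
  show ?thesis by (rule qmod_poly_op_nonneg[OF P order_refl qmod_of_nonneg[OF L nn]])
qed

lemma norm_poly_op_le:
  assumes P: "positive_op P" and bd: "\<And>x. 0 \<le> x \<Longrightarrow> x \<le> onorm P \<Longrightarrow> \<bar>poly q x\<bar> \<le> M"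
  shows "norm (poly_op q P v) \<le> M * norm v"
proof -
  have B: "bounded_clinear P" using P by (rule positive_op_bounded_clinear)
  have M0: "0 \<le> M" using bd[of 0] onorm_nonneg_bounded_clinear[OF B] by simp
  have "0 \<le> poly ([:M\<^sup>2:] - q * q) x" if "0 \<le> x" "x \<le> onorm P" for x
  proof -
    have "(poly q x)\<^sup>2 \<le> M\<^sup>2" using bd[OF that] M0 by (metis abs_le_square_iff abs_of_nonneg)
    then show ?thesis by (simp add: power2_eq_square)
  qed
  then have "0 \<le> Re (cinner (poly_op ([:M\<^sup>2:] - q * q) P v) v)" by (rule poly_op_nonneg[OF P])
  moreover have "cinner (poly_op q P (poly_op q P v)) v = cinner (poly_op q P v) (poly_op q P v)"
    by (simp add: poly_op_selfadjoint[OF P])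
  ultimately have "(norm (poly_op q P v))\<^sup>2 \<le> (M * norm v)\<^sup>2"
    by (simp add: poly_op_diff poly_op_const poly_op_mult[OF B] cinner_diff_left
        cinner_scaleC_left Re_cinner_self power_mult_distrib)
  then show ?thesis using M0 power2_le_imp_le[of "norm (poly_op q P v)" "M * norm v"] by simp
qed


section \<open>Real inequalities and polynomial approximation\<close>

lemma bernoulli_powr:
  fixes p t :: real
  assumes p: "1 \<le> p" and t: "0 \<le> t"
  shows "1 + p * (t - 1) \<le> t powr p"
proof (cases "t = 0")
  case True then show ?thesis using p by simp
next
  case False
  then have t0: "0 < t" using t by simp
  define h where "h = (\<lambda>x::real. x powr p - p * x)"
  have dh: "DERIV h x :> p * x powr (p - 1) - p * 1" if "0 < x" for x
    unfolding h_def by (intro DERIV_diff has_real_derivative_powr[OF that] DERIV_cmult DERIV_ident)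
  have "h 1 \<le> h t"
  proof (cases "1 \<le> t")
    case True
    show ?thesis
    proof (rule DERIV_nonneg_imp_nondecreasing[OF True])
      fix x assume x: "1 \<le> x" "x \<le> t"
      have "1 \<le> x powr (p - 1)" using x p by (intro ge_one_powr_ge_zero) auto
      then have "0 \<le> p * x powr (p - 1) - p * 1" using p by simp
      then show "\<exists>y. DERIV h x :> y \<and> 0 \<le> y" using dh[of x] x by auto
    qed
  next
    case False
    show ?thesis
    proof (rule DERIV_nonpos_imp_nonincreasing[of t 1 h])
      show "t \<le> 1" using False by simp
      fix x assume x: "t \<le> x" "x \<le> 1"
      have "x powr (p - 1) \<le> 1" using x p t0 by (intro powr_le1) auto
      then have "p * x powr (p - 1) - p * 1 \<le> 0" using p by (simp add: mult_left_le)
      then show "\<exists>y. DERIV h x :> y \<and> y \<le> 0" using dh[of x] x t0 by auto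
    qed
  qed
  then show ?thesis by (simp add: h_def algebra_simps)
qed

lemma powr_tangent_le:
  fixes p u c :: real
  assumes p: "1 \<le> p" and u: "0 \<le> u" and c: "0 < c"
  shows "c powr p + p * c powr (p - 1) * (u - c) \<le> u powr p"
proof -
  have "c powr p * (1 + p * (u / c - 1)) \<le> c powr p * ((u / c) powr p)"
    using bernoulli_powr[OF p, of "u / c"] u c by (intro mult_left_mono) auto
  also have "c powr p * ((u / c) powr p) = u powr p"
    using c by (simp add: powr_divide)
  also have "c powr p * (1 + p * (u / c - 1)) = c powr p + p * c powr (p - 1) * (u - c)"
    using c by (simp add: powr_diff field_simps)
  finally show ?thesis .
qed

lemma powr_midpoint_le:
  fixes p a b :: real
  assumes p: "1 \<le> p" and a: "0 \<le> a" and b: "0 \<le> b"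
  shows "((a + b) / 2) powr p \<le> (a powr p + b powr p) / 2"
proof (cases "a + b = 0")
  case True then have "a = 0" "b = 0" using a b by auto
  then show ?thesis using p by simp
next
  case False
  define c where "c = (a + b) / 2"
  have c: "0 < c" using False a b by (simp add: c_def)
  have "c powr p + p * c powr (p - 1) * (a - c) \<le> a powr p"
    "c powr p + p * c powr (p - 1) * (b - c) \<le> b powr p"
    by (rule powr_tangent_le[OF p a c], rule powr_tangent_le[OF p b c])
  moreover have "p * c powr (p - 1) * (a - c) + p * c powr (p - 1) * (b - c) = 0"
    by (simp add: c_def flip: distrib_left)
  ultimately show ?thesis by (simp add: c_def[symmetric])
qed

lemma le_of_forall_pos_le_add_mult:
  fixes a b K :: real
  assumes "\<And>e. 0 < e \<Longrightarrow> a \<le> b + e * K" "0 \<le> K"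
  shows "a \<le> b"
proof (rule field_le_epsilon)
  fix e :: real assume e: "0 < e"
  have "a \<le> b + e / (K + 1) * K" using assms(2) e by (intro assms(1)) simp
  also have "e / (K + 1) * K \<le> e" using e assms(2) by (simp add: field_simps)
  finally show "a \<le> b + e" by simp
qed

lemma weierstrass_poly:
  fixes f :: "real \<Rightarrow> real"
  assumes "continuous_on {0..L} f"
  obtains ps where "uniform_limit {0..L} (\<lambda>n. poly (ps n)) f sequentially"
proof -
  have "\<exists>p. \<forall>x\<in>{0..L}. \<bar>poly p x - f x\<bar> < 1 / Suc n" for n
  proof -
    obtain g where g: "real_polynomial_function g" "\<And>x. x \<in> {0..L} \<Longrightarrow> \<bar>f x - g x\<bar> < 1 / Suc n"
      using Stone_Weierstrass_real_polynomial_function[OF compact_Icc assms, of "1 / Suc n"] by auto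
    obtain a m where ge: "g = (\<lambda>x. \<Sum>i\<le>m. a i * x ^ i)"
      using g(1) real_polynomial_function_iff_sum by blast
    have "poly (\<Sum>i\<le>m. monom (a i) i) x = g x" for x by (simp add: ge poly_sum poly_monom)
    then show ?thesis using g(2) by (metis abs_minus_commute)
  qed
  then obtain ps where ps: "\<And>n x. x \<in> {0..L} \<Longrightarrow> \<bar>poly (ps n) x - f x\<bar> < 1 / Suc n" by metis
  have "uniform_limit {0..L} (\<lambda>n. poly (ps n)) f sequentially"
  proof (rule uniform_limitI)
    fix e :: real assume e: "0 < e"
    then have "\<forall>\<^sub>F n in sequentially. 1 / real (Suc n) < e"
      by (intro order_tendstoD(2)[OF LIMSEQ_Suc[OF lim_inverse_n']])
    then show "\<forall>\<^sub>F n in sequentially. \<forall>x\<in>{0..L}. dist (poly (ps n) x) (f x) < e"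
      by eventually_elim (metis dist_real_def ps order.strict_trans)
  qed
  then show ?thesis by (rule that)
qed


section \<open>Convergence in operator norm\<close>

definition op_tendsto :: "(nat \<Rightarrow> 'a::real_normed_vector \<Rightarrow> 'b::real_normed_vector) \<Rightarrow> ('a \<Rightarrow> 'b) \<Rightarrow> bool"
  where "op_tendsto A Q \<longleftrightarrow> (\<forall>e>0. \<forall>\<^sub>F n in sequentially. \<forall>v. norm (A n v - Q v) \<le> e * norm v)"

lemma op_tendstoD:
  "op_tendsto A Q \<Longrightarrow> 0 < e \<Longrightarrow> \<forall>\<^sub>F n in sequentially. \<forall>v. norm (A n v - Q v) \<le> e * norm v"
  unfolding op_tendsto_def by blast

lemma op_tendstoI:
  "(\<And>e. 0 < e \<Longrightarrow> \<forall>\<^sub>F n in sequentially. \<forall>v. norm (A n v - Q v) \<le> e * norm v) \<Longrightarrow> op_tendsto A Q"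
  unfolding op_tendsto_def by blast

lemma op_tendsto_const: "op_tendsto (\<lambda>n. Q) Q"
  by (rule op_tendstoI) simp

lemma op_tendsto_unique:
  assumes a: "op_tendsto A Q" and b: "op_tendsto A Q'"
  shows "Q = Q'"
proof
  fix v
  have "norm (Q v - Q' v) \<le> 0 + e * (2 * norm v)" if e: "0 < e" for e
  proof -
    obtain n where "norm (A n v - Q v) \<le> e * norm v" "norm (A n v - Q' v) \<le> e * norm v"
      using eventually_happens'[OF sequentially_bot eventually_conj[OF op_tendstoD[OF a e] op_tendstoD[OF b e]]]
      by blast
    moreover have "norm (Q v - Q' v) \<le> norm (A n v - Q v) + norm (A n v - Q' v)"
      using norm_triangle_ineq4[of "A n v - Q' v" "A n v - Q v"] by (simp add: norm_minus_commute)
    ultimately show ?thesis by simp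
  qed
  then have "norm (Q v - Q' v) \<le> 0" by (rule le_of_forall_pos_le_add_mult) auto
  then show "Q v = Q' v" by simp
qed

lemma op_tendsto_add:
  assumes a: "op_tendsto A Q" and b: "op_tendsto B R"
  shows "op_tendsto (\<lambda>n v. A n v + B n v) (\<lambda>v. Q v + R v)"
proof (rule op_tendstoI)
  fix e :: real assume "0 < e"
  then have "0 < e / 2" by simp
  from op_tendstoD[OF a this] op_tendstoD[OF b this]
  show "\<forall>\<^sub>F n in sequentially. \<forall>v. norm (A n v + B n v - (Q v + R v)) \<le> e * norm v"
  proof eventually_elim
    case (elim n)
    show ?case
    proof
      fix v
      have "norm (A n v + B n v - (Q v + R v)) \<le> norm (A n v - Q v) + norm (B n v - R v)"
        by (metis add_diff_add norm_triangle_ineq)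
      also have "\<dots> \<le> e / 2 * norm v + e / 2 * norm v" using elim by (intro add_mono) auto
      finally show "norm (A n v + B n v - (Q v + R v)) \<le> e * norm v" by simp
    qed
  qed
qed

lemma op_tendsto_compose:
  assumes a: "op_tendsto A Q" and b: "op_tendsto B R" and R: "bounded_clinear R"
    and A: "\<And>n. bounded_clinear (A n)"
    and K: "\<forall>\<^sub>F n in sequentially. \<forall>v. norm (A n v) \<le> K * norm v" and K0: "0 \<le> K"
  shows "op_tendsto (\<lambda>n v. A n (B n v)) (\<lambda>v. Q (R v))"
proof (rule op_tendstoI)
  fix e :: real assume e: "0 < e"
  have R0: "0 \<le> onorm R" by (rule onorm_nonneg_bounded_clinear[OF R])
  define d where "d = e / (K + onorm R + 1)"
  have d: "0 < d" using e K0 R0 by (simp add: d_def)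
  from op_tendstoD[OF a d] op_tendstoD[OF b d] K
  show "\<forall>\<^sub>F n in sequentially. \<forall>v. norm (A n (B n v) - Q (R v)) \<le> e * norm v"
  proof eventually_elim
    case (elim n)
    show ?case
    proof
      fix v
      have "A n (B n v) - Q (R v) = A n (B n v - R v) + (A n (R v) - Q (R v))"
        by (simp add: bounded_clinear_map_diff[OF A])
      then have "norm (A n (B n v) - Q (R v)) \<le> norm (A n (B n v - R v)) + norm (A n (R v) - Q (R v))"
        by (metis norm_triangle_ineq)
      also have "\<dots> \<le> K * (d * norm v) + d * (onorm R * norm v)"
      proof (rule add_mono)
        show "norm (A n (B n v - R v)) \<le> K * (d * norm v)"
          using elim K0 by (meson mult_left_mono order_trans)
        have "norm (A n (R v) - Q (R v)) \<le> d * norm (R v)" using elim by auto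
        also have "\<dots> \<le> d * (onorm R * norm v)"
          using d by (intro mult_left_mono bounded_clinear_onorm[OF R]) auto
        finally show "norm (A n (R v) - Q (R v)) \<le> d * (onorm R * norm v)" .
      qed
      also have "\<dots> \<le> d * (K + onorm R + 1) * norm v"
        using d by (simp add: algebra_simps)
      also have "\<dots> = e * norm v" using K0 R0 by (simp add: d_def)
      finally show "norm (A n (B n v) - Q (R v)) \<le> e * norm v" .
    qed
  qed
qed

lemma op_tendsto_compose_left:
  assumes a: "op_tendsto A Q" and C: "bounded_clinear C"
  shows "op_tendsto (\<lambda>n v. C (A n v)) (\<lambda>v. C (Q v))"
proof (rule op_tendstoI)
  fix e :: real assume e: "0 < e"
  have K: "0 \<le> onorm C" by (rule onorm_nonneg_bounded_clinear[OF C])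
  have "0 < e / (onorm C + 1)" using e K by simp
  from op_tendstoD[OF a this]
  show "\<forall>\<^sub>F n in sequentially. \<forall>v. norm (C (A n v) - C (Q v)) \<le> e * norm v"
  proof (rule eventually_mono, intro allI)
    fix n v assume n: "\<forall>v. norm (A n v - Q v) \<le> e / (onorm C + 1) * norm v"
    have "norm (C (A n v) - C (Q v)) \<le> onorm C * norm (A n v - Q v)"
      by (simp add: bounded_clinear_onorm[OF C] flip: bounded_clinear_map_diff[OF C])
    also have "\<dots> \<le> (onorm C + 1) * (e / (onorm C + 1) * norm v)"
      using n K by (intro mult_mono) auto
    finally show "norm (C (A n v) - C (Q v)) \<le> e * norm v" using K by simp
  qed
qed

lemma op_tendsto_compose_right:
  assumes a: "op_tendsto A Q" and C: "bounded_clinear C"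
  shows "op_tendsto (\<lambda>n v. A n (C v)) (\<lambda>v. Q (C v))"
proof (rule op_tendstoI)
  fix e :: real assume e: "0 < e"
  have K: "0 \<le> onorm C" by (rule onorm_nonneg_bounded_clinear[OF C])
  have "0 < e / (onorm C + 1)" using e K by simp
  from op_tendstoD[OF a this]
  show "\<forall>\<^sub>F n in sequentially. \<forall>v. norm (A n (C v) - Q (C v)) \<le> e * norm v"
  proof (rule eventually_mono, intro allI)
    fix n v assume n: "\<forall>v. norm (A n v - Q v) \<le> e / (onorm C + 1) * norm v"
    have "norm (C v) \<le> (onorm C + 1) * norm v"
      using bounded_clinear_onorm[OF C, of v] by (simp add: distrib_right add_increasing2)
    then have "norm (A n (C v) - Q (C v)) \<le> e / (onorm C + 1) * ((onorm C + 1) * norm v)"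
      using n e K by (intro order_trans[OF spec[OF n, of "C v"]] mult_left_mono) auto
    then show "norm (A n (C v) - Q (C v)) \<le> e * norm v" using K by simp
  qed
qed

lemma divide_add_one_mult_less:
  fixes e c :: real
  assumes "0 < e" "0 \<le> c"
  shows "0 < e / (c + 1)" and "e / (c + 1) * c < e"
  using assms by (simp_all add: field_simps)

lemma op_tendsto_LIMSEQ: "op_tendsto A Q \<Longrightarrow> (\<lambda>n. A n v) \<longlonglongrightarrow> Q v"
proof (rule LIMSEQ_I)
  fix e :: real assume a: "op_tendsto A Q" and e: "0 < e"
  note d = divide_add_one_mult_less[OF e norm_ge_zero[of v]]
  from op_tendstoD[OF a d(1)] obtain N where "\<And>n. N \<le> n \<Longrightarrow> norm (A n v - Q v) \<le> e / (norm v + 1) * norm v"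
    unfolding eventually_sequentially by blast
  then show "\<exists>N. \<forall>n\<ge>N. norm (A n v - Q v) < e" using d(2) by (meson order.strict_trans1)
qed

lemma bounded_clinear_op_tendsto:
  fixes A :: "nat \<Rightarrow> 'a::complex_normed_vector \<Rightarrow> 'b::complex_normed_vector"
  assumes a: "op_tendsto A Q" and A: "\<And>n. bounded_clinear (A n)"
  shows "bounded_clinear Q"
proof -
  note lim = op_tendsto_LIMSEQ[OF a]
  obtain n0 where n0: "\<forall>v. norm (A n0 v - Q v) \<le> 1 * norm v"
    using eventually_happens'[OF sequentially_bot op_tendstoD[OF a zero_less_one]] by blast
  show ?thesis
  proof (rule bounded_clinearI[where K="onorm (A n0) + 1"])
    fix x y
    have "(\<lambda>n. A n (x + y)) \<longlonglongrightarrow> Q x + Q y"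
      using tendsto_add[OF lim[of x] lim[of y]] by (simp add: bounded_clinear_map_add[OF A])
    then show "Q (x + y) = Q x + Q y" by (rule LIMSEQ_unique[OF lim])
  next
    fix c x
    have "bounded_linear (\<lambda>v::'b. c *\<^sub>C v)"
      by (rule bounded_clinear_bounded_linear[OF bounded_clinear_scaleC[OF bounded_clinear_ident]])
    from bounded_linear.tendsto[OF this lim[of x]]
    have "(\<lambda>n. A n (c *\<^sub>C x)) \<longlonglongrightarrow> c *\<^sub>C Q x" by (simp add: bounded_clinear_map_scaleC[OF A])
    then show "Q (c *\<^sub>C x) = c *\<^sub>C Q x" by (rule LIMSEQ_unique[OF lim])
  next
    fix v
    have "norm (Q v) \<le> norm (A n0 v) + norm (A n0 v - Q v)"
      using norm_triangle_ineq4[of "A n0 v" "A n0 v - Q v"] by simp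
    also have "\<dots> \<le> onorm (A n0) * norm v + norm v"
      using n0 by (intro add_mono bounded_clinear_onorm[OF A]) auto
    finally show "norm (Q v) \<le> (onorm (A n0) + 1) * norm v" by (simp add: algebra_simps)
  qed
qed

lemma op_tendsto_iff_onorm:
  fixes A :: "nat \<Rightarrow> 'a::complex_normed_vector \<Rightarrow> 'b::complex_normed_vector"
  assumes "\<And>n. bounded_clinear (\<lambda>v. A n v - Q v)"
  shows "op_tendsto A Q \<longleftrightarrow> (\<lambda>n. onorm (\<lambda>v. A n v - Q v)) \<longlonglongrightarrow> 0"
proof
  assume a: "op_tendsto A Q"
  show "(\<lambda>n. onorm (\<lambda>v. A n v - Q v)) \<longlonglongrightarrow> 0"
  proof (rule LIMSEQ_I)
    fix e :: real assume e: "0 < e"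
    then obtain N where N: "\<And>n. n \<ge> N \<Longrightarrow> \<forall>v. norm (A n v - Q v) \<le> e / 2 * norm v"
      using op_tendstoD[OF a, of "e / 2"] by (auto simp: eventually_sequentially)
    have "norm (onorm (\<lambda>v. A n v - Q v) - 0) < e" if "N \<le> n" for n
    proof -
      have "onorm (\<lambda>v. A n v - Q v) \<le> e / 2" using N[OF that] e by (intro onorm_bound) auto
      then show ?thesis using e onorm_nonneg_bounded_clinear[OF assms] by simp
    qed
    then show "\<exists>N. \<forall>n\<ge>N. norm (onorm (\<lambda>v. A n v - Q v) - 0) < e" by blast
  qed
next
  assume l: "(\<lambda>n. onorm (\<lambda>v. A n v - Q v)) \<longlonglongrightarrow> 0"
  show "op_tendsto A Q"
  proof (rule op_tendstoI)
    fix e :: real assume "0 < e"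
    from order_tendstoD(2)[OF l this]
    show "\<forall>\<^sub>F n in sequentially. \<forall>v. norm (A n v - Q v) \<le> e * norm v"
    proof (rule eventually_mono, intro allI)
      fix n and v :: 'a assume "onorm (\<lambda>v. A n v - Q v) < e"
      then have "onorm (\<lambda>v. A n v - Q v) * norm v \<le> e * norm v" by (simp add: mult_right_mono)
      then show "norm (A n v - Q v) \<le> e * norm v"
        using bounded_clinear_onorm[OF assms[of n], of v] by linarith
    qed
  qed
qed


section \<open>The continuous functional calculus\<close>

text \<open>\<open>cfc P f\<close> is \<open>f(P)\<close>: the strong limit of \<open>p\<^sub>n(P)\<close> for a fixed choice of polynomials \<open>p\<^sub>n\<close>
  converging to \<open>f\<close> uniformly on \<open>[0, \<parallel>P\<parallel>]\<close>. By \<open>op_tendsto_cfc\<close> every such sequence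
  converges to it in operator norm, so the choice does not matter.\<close>

definition approx_polys :: "('a::chilbert_space \<Rightarrow> 'a) \<Rightarrow> (real \<Rightarrow> real) \<Rightarrow> nat \<Rightarrow> real poly" where
  "approx_polys P f = (SOME ps. uniform_limit {0..onorm P} (\<lambda>n. poly (ps n)) f sequentially)"

definition cfc :: "('a::chilbert_space \<Rightarrow> 'a) \<Rightarrow> (real \<Rightarrow> real) \<Rightarrow> 'a \<Rightarrow> 'a" where
  "cfc P f v = lim (\<lambda>n. poly_op (approx_polys P f n) P v)"

lemma uniform_limit_approx_polys:
  assumes "continuous_on {0..} f"
  shows "uniform_limit {0..onorm P} (\<lambda>n. poly (approx_polys P f n)) f sequentially"
proof -
  have "continuous_on {0..onorm P} f" by (rule continuous_on_subset[OF assms]) auto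
  then obtain ps where "uniform_limit {0..onorm P} (\<lambda>n. poly (ps n)) f sequentially"
    by (rule weierstrass_poly)
  then show ?thesis
    unfolding approx_polys_def by (rule someI[where P="\<lambda>ps. uniform_limit _ (\<lambda>n. poly (ps n)) _ _"])
qed

lemma poly_op_uniform_Cauchy:
  assumes P: "positive_op P"
    and ps: "uniform_limit {0..onorm P} (\<lambda>n. poly (ps n)) f sequentially"
    and qs: "uniform_limit {0..onorm P} (\<lambda>n. poly (qs n)) f sequentially" and e: "0 < e"
  obtains N where "\<And>m n v. N \<le> m \<Longrightarrow> N \<le> n \<Longrightarrow>
    norm (poly_op (ps m) P v - poly_op (qs n) P v) \<le> e * norm v"
proof -
  have e2: "0 < e / 2" using e by simp
  obtain N where N: "\<forall>n\<ge>N. (\<forall>x\<in>{0..onorm P}. dist (poly (ps n) x) (f x) < e / 2)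
      \<and> (\<forall>x\<in>{0..onorm P}. dist (poly (qs n) x) (f x) < e / 2)"
    using eventually_conj[OF uniform_limitD[OF ps e2] uniform_limitD[OF qs e2]]
    unfolding eventually_sequentially by blast
  have "norm (poly_op (ps m) P v - poly_op (qs n) P v) \<le> e * norm v" if "N \<le> m" "N \<le> n" for m n v
  proof -
    have "norm (poly_op (ps m - qs n) P v) \<le> e * norm v"
    proof (rule norm_poly_op_le[OF P])
      fix x assume "0 \<le> x" "x \<le> onorm P"
      then have "\<bar>poly (ps m) x - f x\<bar> < e / 2" "\<bar>poly (qs n) x - f x\<bar> < e / 2"
        using N that by (auto simp: dist_real_def)
      then show "\<bar>poly (ps m - qs n) x\<bar> \<le> e" by simp (smt (verit))
    qed
    then show ?thesis by (simp add: poly_op_diff)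
  qed
  then show ?thesis using that by blast
qed

lemma LIMSEQ_poly_op_approx_polys:
  assumes P: "positive_op P" and f: "continuous_on {0..} f"
  shows "(\<lambda>n. poly_op (approx_polys P f n) P v) \<longlonglongrightarrow> cfc P f v"
proof -
  note qs = uniform_limit_approx_polys[OF f, of P]
  have "Cauchy (\<lambda>n. poly_op (approx_polys P f n) P v)"
  proof (rule metric_CauchyI)
    fix \<epsilon> :: real assume \<epsilon>: "0 < \<epsilon>"
    note d = divide_add_one_mult_less[OF \<epsilon> norm_ge_zero[of v]]
    obtain N where N: "\<And>m n. N \<le> m \<Longrightarrow> N \<le> n \<Longrightarrow>
        norm (poly_op (approx_polys P f m) P v - poly_op (approx_polys P f n) P v) \<le> \<epsilon> / (norm v + 1) * norm v"
      using poly_op_uniform_Cauchy[OF P qs qs d(1)] by metis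
    with d(2) show "\<exists>M. \<forall>m\<ge>M. \<forall>n\<ge>M. dist (poly_op (approx_polys P f m) P v) (poly_op (approx_polys P f n) P v) < \<epsilon>"
      unfolding dist_norm by (meson order.strict_trans1)
  qed
  then show ?thesis unfolding cfc_def by (simp add: Cauchy_convergent_iff convergent_LIMSEQ_iff)
qed

lemma op_tendsto_cfc:
  assumes P: "positive_op P" and f: "continuous_on {0..} f"
    and ps: "uniform_limit {0..onorm P} (\<lambda>n. poly (ps n)) f sequentially"
  shows "op_tendsto (\<lambda>n. poly_op (ps n) P) (cfc P f)"
proof (rule op_tendstoI)
  fix e :: real assume e: "0 < e"
  obtain N where N: "\<And>m n v. N \<le> m \<Longrightarrow> N \<le> n \<Longrightarrow>
      norm (poly_op (ps m) P v - poly_op (approx_polys P f n) P v) \<le> e * norm v"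
    using poly_op_uniform_Cauchy[OF P ps uniform_limit_approx_polys[OF f] e] by metis
  have "norm (poly_op (ps m) P v - cfc P f v) \<le> e * norm v" if "N \<le> m" for m v
  proof (rule tendsto_upperbound[OF _ _ sequentially_bot])
    show "(\<lambda>n. norm (poly_op (ps m) P v - poly_op (approx_polys P f n) P v))
        \<longlonglongrightarrow> norm (poly_op (ps m) P v - cfc P f v)"
      by (intro tendsto_norm tendsto_diff tendsto_const LIMSEQ_poly_op_approx_polys P f)
    show "\<forall>\<^sub>F n in sequentially. norm (poly_op (ps m) P v - poly_op (approx_polys P f n) P v) \<le> e * norm v"
      using N that unfolding eventually_sequentially by blast
  qed
  then show "\<forall>\<^sub>F m in sequentially. \<forall>v. norm (poly_op (ps m) P v - cfc P f v) \<le> e * norm v"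
    unfolding eventually_sequentially by blast
qed

lemma op_tendsto_cfc_approx_polys:
  "positive_op P \<Longrightarrow> continuous_on {0..} f \<Longrightarrow> op_tendsto (\<lambda>n. poly_op (approx_polys P f n) P) (cfc P f)"
  by (rule op_tendsto_cfc[OF _ _ uniform_limit_approx_polys])

lemma bounded_clinear_cfc:
  assumes P: "positive_op P" and f: "continuous_on {0..} f"
  shows "bounded_clinear (cfc P f)"
  by (rule bounded_clinear_op_tendsto[OF op_tendsto_cfc_approx_polys[OF P f]
        bounded_clinear_poly_op[OF positive_op_bounded_clinear[OF P]]])

lemma cfc_poly:
  assumes P: "positive_op P"
  shows "cfc P (poly p) = poly_op p P"
  by (rule op_tendsto_unique[OF op_tendsto_cfc[OF P _ uniform_limit_const] op_tendsto_const])
    (auto intro: continuous_intros)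

lemma cfc_ident:
  assumes P: "positive_op P" shows "cfc P (\<lambda>x. x) = P"
proof -
  have "cfc P (\<lambda>x. x) = cfc P (poly [:0, 1:])" by (rule arg_cong[where f="cfc P"]) (simp add: fun_eq_iff)
  also have "\<dots> = P" by (simp add: cfc_poly[OF P] fun_eq_iff poly_op_X[OF positive_op_bounded_clinear[OF P]])
  finally show ?thesis .
qed

lemma cfc_const:
  assumes P: "positive_op P" shows "cfc P (\<lambda>x. c) = (\<lambda>v. complex_of_real c *\<^sub>C v)"
proof -
  have "cfc P (\<lambda>x. c) = cfc P (poly [:c:])" by (rule arg_cong[where f="cfc P"]) (simp add: fun_eq_iff)
  also have "\<dots> = (\<lambda>v. complex_of_real c *\<^sub>C v)" by (simp add: cfc_poly[OF P] fun_eq_iff poly_op_const)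
  finally show ?thesis .
qed

lemma cfc_cong:
  assumes P: "positive_op P" and f: "continuous_on {0..} f" and g: "continuous_on {0..} g"
    and eq: "\<And>x. 0 \<le> x \<Longrightarrow> f x = g x"
  shows "cfc P f = cfc P g"
proof -
  have "uniform_limit {0..onorm P} (\<lambda>n. poly (approx_polys P f n)) f sequentially"
    by (rule uniform_limit_approx_polys[OF f])
  moreover have "uniform_limit {0..onorm P} (\<lambda>n. poly (approx_polys P f n)) f sequentially
      = uniform_limit {0..onorm P} (\<lambda>n. poly (approx_polys P f n)) g sequentially"
    by (rule uniform_limit_cong') (auto simp: eq)
  ultimately have "uniform_limit {0..onorm P} (\<lambda>n. poly (approx_polys P f n)) g sequentially"
    by simp
  then show ?thesis
    by (rule op_tendsto_unique[OF op_tendsto_cfc_approx_polys[OF P f] op_tendsto_cfc[OF P g]])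
qed

lemma cfc_add:
  assumes P: "positive_op P" and f: "continuous_on {0..} f" and g: "continuous_on {0..} g"
  shows "cfc P (\<lambda>x. f x + g x) = (\<lambda>v. cfc P f v + cfc P g v)"
proof -
  have u: "uniform_limit {0..onorm P} (\<lambda>n. poly (approx_polys P f n + approx_polys P g n))
      (\<lambda>x. f x + g x) sequentially"
    using uniform_limit_add[OF uniform_limit_approx_polys[OF f, of P] uniform_limit_approx_polys[OF g, of P]]
    by (simp add: poly_add[abs_def])
  then have "op_tendsto (\<lambda>n v. poly_op (approx_polys P f n) P v + poly_op (approx_polys P g n) P v)
      (cfc P (\<lambda>x. f x + g x))"
    using op_tendsto_cfc[OF P _ u] f g by (simp add: poly_op_add[abs_def] continuous_intros)
  then show ?thesis
    by (rule op_tendsto_unique[OF _ op_tendsto_add[OF op_tendsto_cfc_approx_polys[OF P f]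
          op_tendsto_cfc_approx_polys[OF P g]]])
qed

lemma cfc_scale:
  assumes P: "positive_op P" and f: "continuous_on {0..} f"
  shows "cfc P (\<lambda>x. c * f x) = (\<lambda>v. complex_of_real c *\<^sub>C cfc P f v)"
proof -
  have u: "uniform_limit {0..onorm P} (\<lambda>n. poly (smult c (approx_polys P f n))) (\<lambda>x. c * f x) sequentially"
    using bounded_linear.uniform_limit[OF bounded_linear_mult_right uniform_limit_approx_polys[OF f, of P]]
    by (simp add: poly_smult[abs_def])
  then have "op_tendsto (\<lambda>n v. complex_of_real c *\<^sub>C poly_op (approx_polys P f n) P v) (cfc P (\<lambda>x. c * f x))"
    using op_tendsto_cfc[OF P _ u] f by (simp add: poly_op_smult[abs_def] continuous_intros)
  moreover have "op_tendsto (\<lambda>n v. complex_of_real c *\<^sub>C poly_op (approx_polys P f n) P v)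
      (\<lambda>v. complex_of_real c *\<^sub>C cfc P f v)"
    by (rule op_tendsto_compose_left[OF op_tendsto_cfc_approx_polys[OF P f]
          bounded_clinear_scaleC[OF bounded_clinear_ident]])
  ultimately show ?thesis by (rule op_tendsto_unique)
qed

lemma cfc_diff:
  assumes P: "positive_op P" and f: "continuous_on {0..} f" and g: "continuous_on {0..} g"
  shows "cfc P (\<lambda>x. f x - g x) = (\<lambda>v. cfc P f v - cfc P g v)"
proof -
  have g': "continuous_on {0..} (\<lambda>x. (-1) * g x)" using g by (intro continuous_intros)
  have "cfc P (\<lambda>x. f x + (-1) * g x) = (\<lambda>v. cfc P f v + complex_of_real (-1) *\<^sub>C cfc P g v)"
    by (simp only: cfc_add[OF P f g'] cfc_scale[OF P g])
  moreover have "complex_of_real (-1) *\<^sub>C w = - w" for w :: 'a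
    using scaleC_minus_left[of 1 w] by simp
  ultimately show ?thesis by simp
qed

lemma cfc_mult:
  assumes P: "positive_op P" and f: "continuous_on {0..} f" and g: "continuous_on {0..} g"
  shows "cfc P (\<lambda>x. f x * g x) = (\<lambda>v. cfc P f (cfc P g v))"
proof -
  have B: "bounded_clinear P" by (rule positive_op_bounded_clinear[OF P])
  define ps where "ps = approx_polys P f"
  define qs where "qs = approx_polys P g"
  have ps: "uniform_limit {0..onorm P} (\<lambda>n. poly (ps n)) f sequentially"
    unfolding ps_def by (rule uniform_limit_approx_polys[OF f])
  have qs: "uniform_limit {0..onorm P} (\<lambda>n. poly (qs n)) g sequentially"
    unfolding qs_def by (rule uniform_limit_approx_polys[OF g])
  have bounded: "bounded (h ` {0..onorm P})" if "continuous_on {0..} h" for h :: "real \<Rightarrow> real"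
    by (intro compact_imp_bounded compact_continuous_image continuous_on_subset[OF that]) auto
  obtain M where M: "\<forall>x\<in>{0..onorm P}. \<bar>f x\<bar> \<le> M"
    using bounded[OF f] unfolding bounded_iff by auto
  have u: "uniform_limit {0..onorm P} (\<lambda>n. poly (ps n * qs n)) (\<lambda>x. f x * g x) sequentially"
    using uniform_lim_mult[OF ps qs bounded[OF f] bounded[OF g]] by (simp add: poly_mult[abs_def])
  then have "op_tendsto (\<lambda>n v. poly_op (ps n) P (poly_op (qs n) P v)) (cfc P (\<lambda>x. f x * g x))"
    using op_tendsto_cfc[OF P _ u] f g by (simp add: poly_op_mult[OF B, abs_def] continuous_intros)
  moreover have "op_tendsto (\<lambda>n v. poly_op (ps n) P (poly_op (qs n) P v)) (\<lambda>v. cfc P f (cfc P g v))"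
  proof (rule op_tendsto_compose[OF op_tendsto_cfc[OF P f ps] op_tendsto_cfc[OF P g qs]
        bounded_clinear_cfc[OF P g] bounded_clinear_poly_op[OF B]])
    show "\<forall>\<^sub>F n in sequentially. \<forall>v. norm (poly_op (ps n) P v) \<le> (M + 1) * norm v"
      using uniform_limitD[OF ps zero_less_one]
    proof (rule eventually_mono, intro allI norm_poly_op_le[OF P])
      fix n x assume "\<forall>x\<in>{0..onorm P}. dist (poly (ps n) x) (f x) < 1" "0 \<le> x" "x \<le> onorm P"
      then show "\<bar>poly (ps n) x\<bar> \<le> M + 1" using M by (force simp: dist_real_def)
    qed
    show "0 \<le> M + 1" using M onorm_nonneg_bounded_clinear[OF B] by force
  qed
  ultimately show ?thesis by (rule op_tendsto_unique)
qed

lemma tendsto_cinner_left: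
  assumes "X \<longlonglongrightarrow> a"
  shows "(\<lambda>n. cinner (X n) y) \<longlonglongrightarrow> cinner a y"
proof -
  have "(\<lambda>n. cinner (X n) y - cinner a y) \<longlonglongrightarrow> 0"
  proof (rule Lim_null_comparison[OF always_eventually])
    show "\<forall>n. norm (cinner (X n) y - cinner a y) \<le> norm (X n - a) * norm y"
      by (simp add: cmod_cinner_le flip: cinner_diff_left)
    have "(\<lambda>n. norm (X n - a) * norm y) \<longlonglongrightarrow> 0 * norm y"
      using assms by (intro tendsto_intros) (simp add: LIM_zero_iff tendsto_norm_zero_iff)
    then show "(\<lambda>n. norm (X n - a) * norm y) \<longlonglongrightarrow> 0" by simp
  qed
  then show ?thesis by (simp add: LIM_zero_iff)
qed

lemma cfc_selfadjoint:
  assumes P: "positive_op P" and f: "continuous_on {0..} f"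
  shows "cinner (cfc P f x) y = cinner x (cfc P f y)"
proof -
  note lim = op_tendsto_LIMSEQ[OF op_tendsto_cfc_approx_polys[OF P f]]
  have "(\<lambda>n. cinner (poly_op (approx_polys P f n) P x) y) \<longlonglongrightarrow> cinner (cfc P f x) y"
    by (rule tendsto_cinner_left[OF lim])
  moreover have "(\<lambda>n. cinner (poly_op (approx_polys P f n) P x) y) \<longlonglongrightarrow> cinner x (cfc P f y)"
    using tendsto_cnj[OF tendsto_cinner_left[OF lim, of y x]]
    by (simp add: poly_op_selfadjoint[OF P] flip: cinner_commute)
  ultimately show ?thesis by (rule LIMSEQ_unique)
qed

lemma cfc_nonneg:
  assumes P: "positive_op P" and f: "continuous_on {0..} f" and nn: "\<And>x. 0 \<le> x \<Longrightarrow> 0 \<le> f x"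
  shows "0 \<le> Re (cinner (cfc P f v) v)"
proof (rule le_of_forall_pos_le_add_mult[where K="(norm v)\<^sup>2"])
  fix e :: real assume e: "0 < e"
  define ps where "ps = approx_polys P f"
  have "\<forall>\<^sub>F n in sequentially. - (e * (norm v)\<^sup>2) \<le> Re (cinner (poly_op (ps n) P v) v)"
    using uniform_limitD[OF uniform_limit_approx_polys[OF f] e, of P]
  proof (rule eventually_mono)
    fix n assume n: "\<forall>x\<in>{0..onorm P}. dist (poly (approx_polys P f n) x) (f x) < e"
    have "0 \<le> Re (cinner (poly_op (ps n + [:e:]) P v) v)"
    proof (rule poly_op_nonneg[OF P])
      fix x assume x: "0 \<le> x" "x \<le> onorm P"
      then have "\<bar>poly (ps n) x - f x\<bar> < e" using n by (simp add: ps_def dist_real_def)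
      then show "0 \<le> poly (ps n + [:e:]) x" using nn[OF x(1)] by (simp add: abs_less_iff)
    qed
    then show "- (e * (norm v)\<^sup>2) \<le> Re (cinner (poly_op (ps n) P v) v)"
      by (simp add: poly_op_add poly_op_const cinner_add_left cinner_scaleC_left Re_cinner_self)
  qed
  moreover have "(\<lambda>n. Re (cinner (poly_op (ps n) P v) v)) \<longlonglongrightarrow> Re (cinner (cfc P f v) v)"
    unfolding ps_def by (intro tendsto_Re tendsto_cinner_left op_tendsto_LIMSEQ op_tendsto_cfc_approx_polys P f)
  ultimately have "- (e * (norm v)\<^sup>2) \<le> Re (cinner (cfc P f v) v)"
    by (intro tendsto_lowerbound[OF _ _ sequentially_bot])
  then show "0 \<le> Re (cinner (cfc P f v) v) + e * (norm v)\<^sup>2" by simp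
qed simp

lemma norm_cfc_le:
  assumes P: "positive_op P" and f: "continuous_on {0..} f"
    and bd: "\<And>x. 0 \<le> x \<Longrightarrow> x \<le> onorm P \<Longrightarrow> \<bar>f x\<bar> \<le> M"
  shows "norm (cfc P f v) \<le> M * norm v"
proof (rule le_of_forall_pos_le_add_mult[where K="norm v"])
  fix e :: real assume e: "0 < e"
  define ps where "ps = approx_polys P f"
  have "\<forall>\<^sub>F n in sequentially. norm (poly_op (ps n) P v) \<le> M * norm v + e * norm v"
    using uniform_limitD[OF uniform_limit_approx_polys[OF f] e, of P]
  proof (rule eventually_mono)
    fix n assume n: "\<forall>x\<in>{0..onorm P}. dist (poly (approx_polys P f n) x) (f x) < e"
    have "norm (poly_op (ps n) P v) \<le> (M + e) * norm v"
    proof (rule norm_poly_op_le[OF P])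
      fix x assume x: "0 \<le> x" "x \<le> onorm P"
      then have "\<bar>poly (ps n) x - f x\<bar> < e" using n by (simp add: ps_def dist_real_def)
      then show "\<bar>poly (ps n) x\<bar> \<le> M + e" using bd[OF x] by (simp add: abs_less_iff abs_le_iff)
    qed
    then show "norm (poly_op (ps n) P v) \<le> M * norm v + e * norm v" by (simp add: distrib_right)
  qed
  moreover have "(\<lambda>n. norm (poly_op (ps n) P v)) \<longlonglongrightarrow> norm (cfc P f v)"
    unfolding ps_def by (intro tendsto_norm op_tendsto_LIMSEQ op_tendsto_cfc_approx_polys P f)
  ultimately show "norm (cfc P f v) \<le> M * norm v + e * norm v"
    by (intro tendsto_upperbound[OF _ _ sequentially_bot])
qed simp

lemma positive_op_cfc:
  assumes P: "positive_op P" and f: "continuous_on {0..} f" and nn: "\<And>x. 0 \<le> x \<Longrightarrow> 0 \<le> f x"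
  shows "positive_op (cfc P f)"
  unfolding positive_op_def
  using bounded_clinear_cfc[OF P f] cfc_selfadjoint[OF P f] cfc_nonneg[OF P f nn] by blast

lemma cfc_mono:
  assumes P: "positive_op P" and f: "continuous_on {0..} f" and g: "continuous_on {0..} g"
    and le: "\<And>x. 0 \<le> x \<Longrightarrow> f x \<le> g x"
  shows "Re (cinner (cfc P f v) v) \<le> Re (cinner (cfc P g v) v)"
proof -
  have "0 \<le> Re (cinner (cfc P (\<lambda>x. g x - f x) v) v)"
    using f g le by (intro cfc_nonneg[OF P]) (auto intro: continuous_intros)
  then show ?thesis by (simp add: cfc_diff[OF P g f] cinner_diff_left)
qed


section \<open>Real powers and absolute values of operators\<close>

lemma fpow_nonneg: "0 \<le> x \<Longrightarrow> 0 \<le> fpow t x"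
  by (simp add: fpow_def)

lemma fpow_add:
  assumes "0 \<le> x" "0 \<le> s" "0 \<le> t"
  shows "fpow (s + t) x = fpow s x * fpow t x"
  using assms by (cases "x = 0") (auto simp: fpow_def powr_add)

lemma fpow_fpow:
  assumes "0 \<le> x"
  shows "fpow t (fpow s x) = fpow (s * t) x"
  using assms by (cases "x = 0") (auto simp: fpow_def powr_powr)

lemma continuous_on_fpow: "0 \<le> t \<Longrightarrow> continuous_on {0..} (fpow t)"
proof (cases "t = 0")
  case True
  then show ?thesis by (simp add: fpow_def[abs_def])
next
  case False
  assume "0 \<le> t"
  then have "continuous_on {0..} (\<lambda>x::real. x powr t)"
    using False by (intro continuous_on_powr') auto
  then show ?thesis using False by (simp add: fpow_def[abs_def])
qed

lemma op_pow_eq_cfc: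
  assumes P: "positive_op P" and t: "0 \<le> t"
  shows "op_pow P t = cfc P (fpow t)"
  unfolding op_pow_def
proof (rule the_equality)
  have f: "continuous_on {0..} (fpow t)" by (rule continuous_on_fpow[OF t])
  have B: "bounded_clinear (\<lambda>v. poly_op p P v - Q v)" if "bounded_clinear Q" for p and Q :: "'a \<Rightarrow> 'a"
    by (intro bounded_clinear_diff bounded_clinear_poly_op positive_op_bounded_clinear P that)
  have approx_iff: "(\<forall>e>0. \<exists>N. \<forall>n\<ge>N. \<forall>x\<in>{0..onorm P}. \<bar>poly (ps n) x - fpow t x\<bar> < e)
      \<longleftrightarrow> uniform_limit {0..onorm P} (\<lambda>n. poly (ps n)) (fpow t) sequentially" for ps
    by (simp add: uniform_limit_sequentially_iff dist_real_def)
  show "bounded_clinear (cfc P (fpow t)) \<and>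
    (\<forall>ps. (\<forall>e>0. \<exists>N. \<forall>n\<ge>N. \<forall>x\<in>{0..onorm P}. \<bar>poly (ps n) x - fpow t x\<bar> < e) \<longrightarrow>
          (\<lambda>n. onorm (\<lambda>v. poly_op (ps n) P v - cfc P (fpow t) v)) \<longlonglongrightarrow> 0)"
    using op_tendsto_cfc[OF P f] bounded_clinear_cfc[OF P f]
    by (simp add: approx_iff op_tendsto_iff_onorm[OF B])
  fix Q assume Q: "bounded_clinear Q \<and>
    (\<forall>ps. (\<forall>e>0. \<exists>N. \<forall>n\<ge>N. \<forall>x\<in>{0..onorm P}. \<bar>poly (ps n) x - fpow t x\<bar> < e) \<longrightarrow>
          (\<lambda>n. onorm (\<lambda>v. poly_op (ps n) P v - Q v)) \<longlonglongrightarrow> 0)"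
  then have "op_tendsto (\<lambda>n. poly_op (approx_polys P (fpow t) n) P) Q"
    using uniform_limit_approx_polys[OF f, of P] by (simp add: approx_iff op_tendsto_iff_onorm[OF B])
  then show "Q = cfc P (fpow t)"
    by (rule op_tendsto_unique[OF _ op_tendsto_cfc_approx_polys[OF P f]])
qed

lemma poly_op_intertwine:
  fixes C :: "'a::chilbert_space \<Rightarrow> 'b::chilbert_space"
  assumes C: "bounded_clinear C"
  shows "C (poly_op p (adj C \<circ> C) v) = poly_op p (C \<circ> adj C) (C v)"
proof (induct p arbitrary: v)
  case 0 then show ?case by (simp add: bounded_clinear_map_zero[OF C])
next
  case (pCons a p)
  have BP: "bounded_clinear (adj C \<circ> C)"
    by (rule positive_op_bounded_clinear[OF positive_op_adj_comp[OF C]])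
  have BR: "bounded_clinear (C \<circ> adj C)"
    by (rule positive_op_bounded_clinear[OF positive_op_comp_adj[OF C]])
  have "C (poly_op (pCons a p) (adj C \<circ> C) v)
      = complex_of_real a *\<^sub>C C v + C (adj C (C (poly_op p (adj C \<circ> C) v)))"
    by (simp add: poly_op_pCons[OF BP] bounded_clinear_map_add[OF C] bounded_clinear_map_scaleC[OF C])
  also have "\<dots> = complex_of_real a *\<^sub>C C v + C (adj C (poly_op p (C \<circ> adj C) (C v)))"
    by (simp only: pCons(2))
  also have "\<dots> = poly_op (pCons a p) (C \<circ> adj C) (C v)"
    by (simp only: poly_op_pCons[OF BR] comp_apply)
  finally show ?case .
qed

lemma cfc_intertwine:
  fixes C :: "'a::chilbert_space \<Rightarrow> 'b::chilbert_space"
  assumes C: "bounded_clinear C" and f: "continuous_on {0..} f"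
  shows "C (cfc (adj C \<circ> C) f v) = cfc (C \<circ> adj C) f (C v)"
proof -
  define P where "P = adj C \<circ> C"
  define R where "R = C \<circ> adj C"
  have P: "positive_op P" unfolding P_def by (rule positive_op_adj_comp[OF C])
  have R: "positive_op R" unfolding R_def by (rule positive_op_comp_adj[OF C])
  obtain ps where ps: "uniform_limit {0..max (onorm P) (onorm R)} (\<lambda>n. poly (ps n)) f sequentially"
    using weierstrass_poly continuous_on_subset[OF f] by (metis atLeast_iff atLeastAtMost_iff subsetI)
  have "op_tendsto (\<lambda>n v. C (poly_op (ps n) P v)) (\<lambda>v. C (cfc P f v))"
    by (rule op_tendsto_compose_left[OF op_tendsto_cfc[OF P f] C])
      (rule uniform_limit_on_subset[OF ps], auto)
  moreover have "op_tendsto (\<lambda>n v. poly_op (ps n) R (C v)) (\<lambda>v. cfc R f (C v))"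
    by (rule op_tendsto_compose_right[OF op_tendsto_cfc[OF R f] C])
      (rule uniform_limit_on_subset[OF ps], auto)
  moreover have "(\<lambda>n v. C (poly_op (ps n) P v)) = (\<lambda>n v. poly_op (ps n) R (C v))"
    unfolding P_def R_def by (simp add: fun_eq_iff poly_op_intertwine[OF C])
  ultimately have "(\<lambda>v. C (cfc P f v)) = (\<lambda>v. cfc R f (C v))"
    using op_tendsto_unique by metis
  then show ?thesis unfolding P_def R_def by metis
qed

lemma poly_op_cfc:
  assumes P: "positive_op P" and h: "continuous_on {0..} h" and h0: "\<And>x. 0 \<le> x \<Longrightarrow> 0 \<le> h x"
  shows "poly_op q (cfc P h) = cfc P (\<lambda>x. poly q (h x))"
proof (induct q)
  case 0
  then show ?case using cfc_const[OF P, of 0] by (simp add: fun_eq_iff)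
next
  case (pCons a q)
  have qh: "continuous_on {0..} (\<lambda>x. poly q (h x))" by (intro continuous_intros h)
  have "poly_op (pCons a q) (cfc P h) v = cfc P (\<lambda>x. a) v + cfc P h (cfc P (\<lambda>x. poly q (h x)) v)" for v
    by (simp add: poly_op_pCons[OF bounded_clinear_cfc[OF P h]] pCons cfc_const[OF P])
  then show ?case
    using h qh by (simp add: fun_eq_iff cfc_add[OF P] cfc_mult[OF P] continuous_intros)
qed

lemma cfc_comp:
  assumes P: "positive_op P" and h: "continuous_on {0..} h" and h0: "\<And>x. 0 \<le> x \<Longrightarrow> 0 \<le> h x"
    and g: "continuous_on {0..} g"
  shows "cfc (cfc P h) g = cfc P (\<lambda>x. g (h x))"
proof -
  define S where "S = cfc P h"
  have S: "positive_op S" unfolding S_def by (rule positive_op_cfc[OF P h h0])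
  have gh: "continuous_on {0..} (\<lambda>x. g (h x))"
    by (rule continuous_on_compose2[OF g h]) (auto simp: h0)
  obtain M where M: "onorm S \<le> M" "\<And>x. 0 \<le> x \<Longrightarrow> x \<le> onorm P \<Longrightarrow> h x \<le> M"
  proof -
    have "bounded (h ` {0..onorm P})"
      by (intro compact_imp_bounded compact_continuous_image continuous_on_subset[OF h]) auto
    then obtain B where "\<forall>x\<in>h ` {0..onorm P}. norm x \<le> B"
      unfolding bounded_iff by blast
    then have "h x \<le> B" if "0 \<le> x" "x \<le> onorm P" for x
      using that by (metis abs_le_D1 atLeastAtMost_iff image_eqI real_norm_def)
    then show ?thesis using that[of "max (onorm S) B"] by fastforce
  qed
  obtain ps where ps: "uniform_limit {0..M} (\<lambda>n. poly (ps n)) g sequentially"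
    by (rule weierstrass_poly[OF continuous_on_subset[OF g]]) auto
  have "op_tendsto (\<lambda>n. poly_op (ps n) S) (cfc S g)"
    by (rule op_tendsto_cfc[OF S g uniform_limit_on_subset[OF ps]]) (use M in auto)
  moreover have "op_tendsto (\<lambda>n. poly_op (ps n) S) (cfc P (\<lambda>x. g (h x)))"
  proof (rule op_tendstoI)
    fix e :: real assume "0 < e"
    from uniform_limitD[OF ps this]
    show "\<forall>\<^sub>F n in sequentially. \<forall>v. norm (poly_op (ps n) S v - cfc P (\<lambda>x. g (h x)) v) \<le> e * norm v"
    proof (rule eventually_mono, intro allI)
      fix n v assume n: "\<forall>x\<in>{0..M}. dist (poly (ps n) x) (g x) < e"
      have "poly_op (ps n) S v - cfc P (\<lambda>x. g (h x)) v = cfc P (\<lambda>x. poly (ps n) (h x) - g (h x)) v"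
        using h gh by (simp add: S_def poly_op_cfc[OF P h h0] cfc_diff[OF P] continuous_intros)
      also have "norm \<dots> \<le> e * norm v"
      proof (rule norm_cfc_le[OF P])
        show "continuous_on {0..} (\<lambda>x. poly (ps n) (h x) - g (h x))"
          using h gh by (intro continuous_intros)
        fix x assume "0 \<le> x" "x \<le> onorm P"
        then have "h x \<in> {0..M}" using h0 M(2) by auto
        then show "\<bar>poly (ps n) (h x) - g (h x)\<bar> \<le> e"
          using n by (auto simp: dist_real_def less_imp_le)
      qed
      finally show "norm (poly_op (ps n) S v - cfc P (\<lambda>x. g (h x)) v) \<le> e * norm v" .
    qed
  qed
  ultimately show ?thesis unfolding S_def by (rule op_tendsto_unique)
qed

lemma op_pow_absop:
  fixes S :: "'a::chilbert_space \<Rightarrow> 'b::chilbert_space"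
  assumes S: "bounded_clinear S" and t: "0 \<le> t"
  shows "op_pow (absop S) t = cfc (adj S \<circ> S) (fpow (t / 2))"
proof -
  have P: "positive_op (adj S \<circ> S)" by (rule positive_op_adj_comp[OF S])
  have "op_pow (absop S) t = cfc (cfc (adj S \<circ> S) (fpow (1/2))) (fpow t)"
    unfolding absop_def using positive_op_cfc[OF P continuous_on_fpow fpow_nonneg]
    by (simp add: op_pow_eq_cfc[OF P] op_pow_eq_cfc[OF _ t])
  also have "\<dots> = cfc (adj S \<circ> S) (\<lambda>x. fpow t (fpow (1/2) x))"
    by (rule cfc_comp[OF P continuous_on_fpow fpow_nonneg continuous_on_fpow[OF t]]) simp_all
  also have "\<dots> = cfc (adj S \<circ> S) (fpow (t / 2))"
    using t by (intro cfc_cong[OF P] continuous_on_compose2[OF continuous_on_fpow continuous_on_fpow]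
        continuous_on_fpow) (auto simp: fpow_fpow fpow_nonneg)
  finally show ?thesis .
qed

lemma op_pow_absop_adj:
  fixes S :: "'a::chilbert_space \<Rightarrow> 'b::chilbert_space"
  assumes S: "bounded_clinear S" and t: "0 \<le> t"
  shows "op_pow (absop (adj S)) t = cfc (S \<circ> adj S) (fpow (t / 2))"
  using op_pow_absop[OF bounded_clinear_adj[OF S] t] by (simp add: adj_adj[OF S])


section \<open>The Hoelder--McCarthy inequality\<close>

lemma power2_norm_cfc:
  assumes P: "positive_op P" and f: "continuous_on {0..} f"
  shows "(norm (cfc P f x))\<^sup>2 = Re (cinner (cfc P (\<lambda>t. f t * f t) x) x)"
proof -
  have "cinner (cfc P f (cfc P f x)) x = cinner (cfc P f x) (cfc P f x)" by (rule cfc_selfadjoint[OF P f])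
  then show ?thesis by (simp add: cfc_mult[OF P f f] Re_cinner_self)
qed

lemma cinner_cfc_scaleC:
  assumes P: "positive_op P" and f: "continuous_on {0..} f"
  shows "Re (cinner (cfc P f (complex_of_real c *\<^sub>C y)) (complex_of_real c *\<^sub>C y))
    = c\<^sup>2 * Re (cinner (cfc P f y) y)"
  by (simp add: bounded_clinear_map_scaleC[OF bounded_clinear_cfc[OF P f]] cinner_scaleC_left
      cinner_scaleC_right power2_eq_square)

text \<open>The support line of \<open>u \<mapsto> u\<^sup>p\<close> at \<open>c = \<langle>P\<^sup>s y, y\<rangle>\<close> lies below \<open>fpow (s p)\<close> after
  substituting \<open>u = fpow s x\<close>; applying the functional calculus and testing against \<open>y\<close>
  turns it into the inequality.\<close>

lemma mccarthy_inequality: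
  assumes P: "positive_op P" and s: "0 \<le> s" and p: "1 \<le> p" and y: "norm y = 1"
  shows "(Re (cinner (cfc P (fpow s) y) y)) powr p \<le> Re (cinner (cfc P (fpow (s * p)) y) y)"
proof -
  define c where "c = Re (cinner (cfc P (fpow s) y) y)"
  have fs: "continuous_on {0..} (fpow s)" by (rule continuous_on_fpow[OF s])
  have fsp: "continuous_on {0..} (fpow (s * p))" by (rule continuous_on_fpow) (use s p in simp)
  have c0: "0 \<le> c" unfolding c_def by (rule cfc_nonneg[OF P fs fpow_nonneg])
  show ?thesis
  proof (cases "c = 0")
    case True
    then show ?thesis using cfc_nonneg[OF P fsp fpow_nonneg] p unfolding c_def[symmetric] by simp
  next
    case False
    then have c: "0 < c" using c0 by simp
    define B where "B = p * c powr (p - 1)"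
    define A where "A = c powr p - B * c"
    have support: "A + B * fpow s x \<le> fpow (s * p) x" if "0 \<le> x" for x
    proof -
      have "c powr p + B * (fpow s x - c) \<le> (fpow s x) powr p"
        unfolding B_def by (rule powr_tangent_le[OF p fpow_nonneg[OF that] c])
      moreover have "fpow (s * p) x = (fpow s x) powr p"
        using p that by (simp add: fpow_fpow[symmetric] fpow_def[of p])
      ultimately show ?thesis by (simp add: A_def algebra_simps)
    qed
    have fAB: "continuous_on {0..} (\<lambda>x. A + B * fpow s x)" by (intro continuous_intros fs)
    have "cfc P (\<lambda>x. A + B * fpow s x) y = complex_of_real A *\<^sub>C y + complex_of_real B *\<^sub>C cfc P (fpow s) y"
      using fs by (simp add: cfc_add[OF P continuous_on_const] cfc_const[OF P] cfc_scale[OF P]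
          continuous_on_mult_left)
    then have "Re (cinner (cfc P (\<lambda>x. A + B * fpow s x) y) y) = c powr p"
      using y by (simp add: cinner_add_left cinner_scaleC_left cinner_self c_def[symmetric] A_def)
    moreover have "Re (cinner (cfc P (\<lambda>x. A + B * fpow s x) y) y) \<le> Re (cinner (cfc P (fpow (s * p)) y) y)"
      by (rule cfc_mono[OF P fAB fsp support])
    ultimately show ?thesis by (simp add: c_def)
  qed
qed


section \<open>The mixed Schwarz inequality\<close>

lemma fpow_one: "0 \<le> x \<Longrightarrow> fpow 1 x = x"
  by (simp add: fpow_def)

lemma power2_norm_eq_cinner_adj_comp:
  fixes C :: "'a::chilbert_space \<Rightarrow> 'b::chilbert_space"
  assumes "bounded_clinear C"
  shows "(norm (C w))\<^sup>2 = Re (cinner ((adj C \<circ> C) w) w)"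
  by (simp add: cinner_adj_left[OF assms] Re_cinner_self)

text \<open>The proof avoids the polar decomposition of \<open>C\<close> by regularizing: with
  \<open>g\<^sub>\<epsilon>(t) = t / (t + \<epsilon>)\<close>, the vector \<open>C x\<close> is within \<open>\<surd>\<epsilon> \<parallel>x\<parallel> / 2\<close> of \<open>C g\<^sub>\<epsilon>(C\<^sup>*C) x\<close>,
  and \<open>g\<^sub>\<epsilon>(t) = t\<^bsup>\<alpha>/2\<^esup> \<cdot> t\<^bsup>1-\<alpha>/2\<^esup> / (t + \<epsilon>)\<close> splits the inner product of the latter between
  \<open>x\<close> and \<open>y\<close>.\<close>

lemma regularizer_bound:
  fixes \<epsilon> t :: real
  assumes \<epsilon>: "0 < \<epsilon>" and t: "0 \<le> t"
  shows "\<epsilon> / (t + \<epsilon>) * (t * (\<epsilon> / (t + \<epsilon>))) \<le> \<epsilon> / 4"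
proof -
  have "4 * \<epsilon> * t \<le> (t + \<epsilon>) * (t + \<epsilon>)"
    using sum_squares_ge_zero[of "t - \<epsilon>" 0] by (simp add: algebra_simps power2_eq_square)
  then have "4 * \<epsilon> * t / ((t + \<epsilon>) * (t + \<epsilon>)) \<le> 1"
    using t \<epsilon> by (simp add: divide_le_eq_1)
  then have "\<epsilon> / 4 * (4 * \<epsilon> * t / ((t + \<epsilon>) * (t + \<epsilon>))) \<le> \<epsilon> / 4 * 1"
    using \<epsilon> by (intro mult_left_mono) auto
  then show ?thesis by (simp add: mult_ac)
qed

lemma norm_regularization_error:
  fixes C :: "'a::chilbert_space \<Rightarrow> 'b::chilbert_space"
  assumes C: "bounded_clinear C" and \<epsilon>: "0 < \<epsilon>"
  shows "norm (C x - C (cfc (adj C \<circ> C) (\<lambda>t. t / (t + \<epsilon>)) x)) \<le> sqrt \<epsilon> / 2 * norm x"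
proof -
  define P where "P = adj C \<circ> C"
  have P: "positive_op P" unfolding P_def by (rule positive_op_adj_comp[OF C])
  define h where "h = (\<lambda>t::real. \<epsilon> / (t + \<epsilon>))"
  define H where "H = cfc P h"
  have cont: "continuous_on {0..} (\<lambda>t::real. c / (t + \<epsilon>))" for c
    using \<epsilon> by (intro continuous_intros) auto
  have h: "continuous_on {0..} h" unfolding h_def by (rule cont)
  have g: "continuous_on {0..} (\<lambda>t::real. t / (t + \<epsilon>))"
    using \<epsilon> by (intro continuous_intros) auto
  have "cfc P h = cfc P (\<lambda>t. 1 - t / (t + \<epsilon>))"
  proof (rule cfc_cong[OF P h])
    show "continuous_on {0..} (\<lambda>t. 1 - t / (t + \<epsilon>))" by (intro continuous_intros g)
    show "h t = 1 - t / (t + \<epsilon>)" if "0 \<le> t" for t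
      using that \<epsilon> by (simp add: h_def field_simps)
  qed
  then have "H x = x - cfc P (\<lambda>t. t / (t + \<epsilon>)) x"
    using cfc_diff[OF P continuous_on_const g] cfc_const[OF P, of 1] by (simp add: H_def)
  then have "C x - C (cfc P (\<lambda>t. t / (t + \<epsilon>)) x) = C (H x)"
    by (simp add: bounded_clinear_map_diff[OF C])
  then have "(norm (C x - C (cfc P (\<lambda>t. t / (t + \<epsilon>)) x)))\<^sup>2 = Re (cinner (P (H x)) (H x))"
    by (simp only: power2_norm_eq_cinner_adj_comp[OF C] P_def)
  also have "cinner (P (H x)) (H x) = cinner (H (P (H x))) x"
    unfolding H_def by (rule cfc_selfadjoint[OF P h, symmetric])
  also have "H (P (H x)) = cfc P (\<lambda>t. h t * (t * h t)) x"
  proof -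
    have th: "continuous_on {0..} (\<lambda>t. t * h t)" by (intro continuous_intros h)
    show ?thesis
      by (simp add: cfc_mult[OF P h th] cfc_mult[OF P continuous_on_id h] cfc_ident[OF P] H_def)
  qed
  also have "Re (cinner \<dots> x) \<le> Re (cinner (cfc P (\<lambda>t. \<epsilon> / 4) x) x)"
    unfolding h_def using \<epsilon>
    by (intro cfc_mono[OF P] regularizer_bound continuous_intros h[unfolded h_def]) auto
  also have "Re (cinner (cfc P (\<lambda>t. \<epsilon> / 4) x) x) = \<epsilon> / 4 * (norm x)\<^sup>2"
    by (simp add: cfc_const[OF P] cinner_scaleC_left cinner_self)
  also have "\<dots> = (sqrt \<epsilon> / 2 * norm x)\<^sup>2"
    using \<epsilon> by (simp add: power_mult_distrib power_divide)
  finally have "norm (C x - C (cfc P (\<lambda>t. t / (t + \<epsilon>)) x)) \<le> sqrt \<epsilon> / 2 * norm x"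
    by (rule power2_le_imp_le) (use \<epsilon> in simp)
  then show ?thesis by (simp add: P_def)
qed

lemma norm_cfc_fpow_half:
  assumes P: "positive_op P" and a0: "0 \<le> \<alpha>"
  shows "norm (cfc P (fpow (\<alpha> / 2)) x) = sqrt (Re (cinner (cfc P (fpow \<alpha>) x) x))"
proof -
  have ca: "continuous_on {0..} (fpow (\<alpha> / 2))" by (rule continuous_on_fpow) (use a0 in simp)
  have "cfc P (\<lambda>t. fpow (\<alpha> / 2) t * fpow (\<alpha> / 2) t) = cfc P (fpow \<alpha>)"
  proof (rule cfc_cong[OF P _ continuous_on_fpow[OF a0]])
    show "continuous_on {0..} (\<lambda>t. fpow (\<alpha> / 2) t * fpow (\<alpha> / 2) t)" by (intro continuous_intros ca)
    show "fpow (\<alpha> / 2) t * fpow (\<alpha> / 2) t = fpow \<alpha> t" if "0 \<le> t" for t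
      using fpow_add[OF that, of "\<alpha> / 2" "\<alpha> / 2"] a0 by simp
  qed
  then have "(norm (cfc P (fpow (\<alpha> / 2)) x))\<^sup>2 = Re (cinner (cfc P (fpow \<alpha>) x) x)"
    using power2_norm_cfc[OF P ca, of x] by simp
  then show ?thesis by (metis norm_ge_zero real_sqrt_unique)
qed

lemma power2_norm_cfc_adj_le:
  fixes C :: "'a::chilbert_space \<Rightarrow> 'b::chilbert_space"
  assumes C: "bounded_clinear C" and n: "continuous_on {0..} n" and f: "continuous_on {0..} f"
    and le: "\<And>t. 0 \<le> t \<Longrightarrow> n t * n t * t \<le> f t"
  shows "(norm (cfc (adj C \<circ> C) n (adj C y)))\<^sup>2 \<le> Re (cinner (cfc (C \<circ> adj C) f y) y)"
proof -
  define P where "P = adj C \<circ> C"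
  define R where "R = C \<circ> adj C"
  have P: "positive_op P" unfolding P_def by (rule positive_op_adj_comp[OF C])
  have R: "positive_op R" unfolding R_def by (rule positive_op_comp_adj[OF C])
  have nn: "continuous_on {0..} (\<lambda>t. n t * n t)" by (intro continuous_intros n)
  have "(norm (cfc P n (adj C y)))\<^sup>2 = Re (cinner (C (cfc P (\<lambda>t. n t * n t) (adj C y))) y)"
    by (simp add: power2_norm_cfc[OF P n] cinner_adj_right[OF C])
  also have "C (cfc P (\<lambda>t. n t * n t) (adj C y)) = cfc R (\<lambda>t. n t * n t) (R y)"
    unfolding P_def R_def using cfc_intertwine[OF C nn] by simp
  also have "\<dots> = cfc R (\<lambda>t. n t * n t * t) y"
    by (simp add: cfc_mult[OF R nn continuous_on_id] cfc_ident[OF R])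
  also have "Re (cinner \<dots> y) \<le> Re (cinner (cfc R f y) y)"
    by (intro cfc_mono[OF R _ f le] continuous_intros n)
  finally show ?thesis unfolding P_def R_def .
qed

lemma cmod_cinner_regularized_le:
  fixes C :: "'a::chilbert_space \<Rightarrow> 'b::chilbert_space"
  assumes C: "bounded_clinear C" and a0: "0 \<le> \<alpha>" and a1: "\<alpha> \<le> 1" and \<epsilon>: "0 < \<epsilon>"
  shows "cmod (cinner (C (cfc (adj C \<circ> C) (\<lambda>t. t / (t + \<epsilon>)) x)) y)
    \<le> sqrt (Re (cinner (cfc (adj C \<circ> C) (fpow \<alpha>) x) x))
      * sqrt (Re (cinner (cfc (C \<circ> adj C) (fpow (1 - \<alpha>)) y) y))"
proof -
  define P where "P = adj C \<circ> C"
  have P: "positive_op P" unfolding P_def by (rule positive_op_adj_comp[OF C])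
  define a where "a = fpow (\<alpha> / 2)"
  define n where "n = (\<lambda>t. fpow (1 - \<alpha> / 2) t / (t + \<epsilon>))"
  have ca: "continuous_on {0..} a" unfolding a_def by (rule continuous_on_fpow) (use a0 in simp)
  have cn: "continuous_on {0..} n" unfolding n_def
    by (rule continuous_on_divide[OF continuous_on_fpow continuous_on_add[OF continuous_on_id continuous_on_const]])
      (use a1 \<epsilon> in auto)
  have "cfc P (\<lambda>t. t / (t + \<epsilon>)) = cfc P (\<lambda>t. n t * a t)"
  proof (rule cfc_cong[OF P])
    show "continuous_on {0..} (\<lambda>t. t / (t + \<epsilon>))" using \<epsilon> by (intro continuous_intros) auto
    show "t / (t + \<epsilon>) = n t * a t" if "0 \<le> t" for t
      using fpow_add[OF that, of "1 - \<alpha> / 2" "\<alpha> / 2"] that a0 a1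
      by (simp add: n_def a_def fpow_one)
  qed (intro continuous_intros cn ca)
  then have "cinner (C (cfc P (\<lambda>t. t / (t + \<epsilon>)) x)) y = cinner (cfc P a x) (cfc P n (adj C y))"
    by (simp add: cfc_mult[OF P cn ca] cinner_adj_right[OF C] cfc_selfadjoint[OF P cn])
  then have "cmod (cinner (C (cfc P (\<lambda>t. t / (t + \<epsilon>)) x)) y) \<le> norm (cfc P a x) * norm (cfc P n (adj C y))"
    by (simp add: cmod_cinner_le)
  also have "\<dots> \<le> norm (cfc P a x) * sqrt (Re (cinner (cfc (C \<circ> adj C) (fpow (1 - \<alpha>)) y) y))"
  proof (rule mult_left_mono[OF _ norm_ge_zero])
    have "n t * n t * t \<le> fpow (1 - \<alpha>) t" if t: "0 \<le> t" for t
    proof -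
      have "fpow (1 - \<alpha> / 2) t * fpow (1 - \<alpha> / 2) t = fpow (1 - \<alpha>) t * t"
        using fpow_add[OF t, of "1 - \<alpha> / 2" "1 - \<alpha> / 2"] fpow_add[OF t, of "1 - \<alpha>" 1] a0 a1 t
        by (simp add: fpow_one)
      then have "n t * n t * t = fpow (1 - \<alpha>) t * (t * t / ((t + \<epsilon>) * (t + \<epsilon>)))"
        by (simp add: n_def)
      also have "\<dots> \<le> fpow (1 - \<alpha>) t * 1"
      proof (rule mult_left_mono)
        have "t * t \<le> (t + \<epsilon>) * (t + \<epsilon>)" using t \<epsilon> by (intro mult_mono) auto
        then show "t * t / ((t + \<epsilon>) * (t + \<epsilon>)) \<le> 1" using t \<epsilon> by (simp add: divide_le_eq_1)
      qed (rule fpow_nonneg[OF t])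
      finally show ?thesis by simp
    qed
    then have "(norm (cfc P n (adj C y)))\<^sup>2 \<le> Re (cinner (cfc (C \<circ> adj C) (fpow (1 - \<alpha>)) y) y)"
      unfolding P_def using a1 by (intro power2_norm_cfc_adj_le C cn continuous_on_fpow) auto
    then show "norm (cfc P n (adj C y)) \<le> sqrt (Re (cinner (cfc (C \<circ> adj C) (fpow (1 - \<alpha>)) y) y))"
      by (simp add: real_le_rsqrt)
  qed
  finally show ?thesis by (simp add: P_def a_def norm_cfc_fpow_half[OF positive_op_adj_comp[OF C] a0])
qed

lemma mixed_schwarz:
  fixes C :: "'a::chilbert_space \<Rightarrow> 'b::chilbert_space"
  assumes C: "bounded_clinear C" and a0: "0 \<le> \<alpha>" and a1: "\<alpha> \<le> 1"
  shows "(cmod (cinner (C x) y))\<^sup>2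
    \<le> Re (cinner (cfc (adj C \<circ> C) (fpow \<alpha>) x) x) * Re (cinner (cfc (C \<circ> adj C) (fpow (1 - \<alpha>)) y) y)"
proof -
  define U where "U = Re (cinner (cfc (adj C \<circ> C) (fpow \<alpha>) x) x)"
  define V where "V = Re (cinner (cfc (C \<circ> adj C) (fpow (1 - \<alpha>)) y) y)"
  have U: "0 \<le> U" unfolding U_def
    by (intro cfc_nonneg positive_op_adj_comp C continuous_on_fpow a0 fpow_nonneg)
  have V: "0 \<le> V" unfolding V_def using a1
    by (intro cfc_nonneg positive_op_comp_adj C continuous_on_fpow fpow_nonneg) auto
  have "cmod (cinner (C x) y) \<le> sqrt U * sqrt V"
  proof (rule le_of_forall_pos_le_add_mult[where K="norm x * norm y / 2"])
    fix e :: real assume e: "0 < e"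
    define G where "G = C (cfc (adj C \<circ> C) (\<lambda>t. t / (t + e\<^sup>2)) x)"
    have "cinner (C x) y = cinner G y + cinner (C x - G) y" by (simp add: cinner_diff_left)
    then have "cmod (cinner (C x) y) \<le> cmod (cinner G y) + cmod (cinner (C x - G) y)"
      by (simp add: norm_triangle_ineq)
    also have "\<dots> \<le> sqrt U * sqrt V + e / 2 * norm x * norm y"
    proof (rule add_mono)
      show "cmod (cinner G y) \<le> sqrt U * sqrt V"
        unfolding G_def U_def V_def using e by (intro cmod_cinner_regularized_le C a0 a1) simp
      have "norm (C x - G) \<le> sqrt (e\<^sup>2) / 2 * norm x"
        unfolding G_def using e by (intro norm_regularization_error C) simp
      then have "norm (C x - G) \<le> e / 2 * norm x" using e by simp
      then have "norm (C x - G) * norm y \<le> e / 2 * norm x * norm y"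
        by (rule mult_right_mono) simp
      then show "cmod (cinner (C x - G) y) \<le> e / 2 * norm x * norm y"
        using cmod_cinner_le[of "C x - G" y] by linarith
    qed
    finally show "cmod (cinner (C x) y) \<le> sqrt U * sqrt V + e * (norm x * norm y / 2)" by simp
  qed simp
  then have "(cmod (cinner (C x) y))\<^sup>2 \<le> (sqrt U * sqrt V)\<^sup>2" by (intro power_mono) simp_all
  then show ?thesis using U V by (simp add: U_def V_def power_mult_distrib)
qed

lemma cmod_cinner_le_mixed_mean:
  fixes C :: "'a::chilbert_space \<Rightarrow> 'b::chilbert_space"
  assumes C: "bounded_clinear C" and a0: "0 \<le> \<alpha>" and a1: "\<alpha> \<le> 1"
  shows "cmod (cinner (C x) y)
    \<le> (Re (cinner (cfc (adj C \<circ> C) (fpow \<alpha>) x) x) + Re (cinner (cfc (C \<circ> adj C) (fpow (1 - \<alpha>)) y) y)) / 2"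
proof -
  define U where "U = Re (cinner (cfc (adj C \<circ> C) (fpow \<alpha>) x) x)"
  define V where "V = Re (cinner (cfc (C \<circ> adj C) (fpow (1 - \<alpha>)) y) y)"
  have "(cmod (cinner (C x) y))\<^sup>2 \<le> U * V" unfolding U_def V_def by (rule mixed_schwarz[OF C a0 a1])
  also have "U * V \<le> ((U + V) / 2)\<^sup>2"
  proof -
    have "((U + V) / 2)\<^sup>2 - U * V = ((U - V) / 2)\<^sup>2" by (simp add: power2_eq_square algebra_simps)
    then show ?thesis using zero_le_power2[of "(U - V) / 2"] by linarith
  qed
  finally have "(cmod (cinner (C x) y))\<^sup>2 \<le> ((U + V) / 2)\<^sup>2" .
  moreover have "0 \<le> U" unfolding U_def
    by (intro cfc_nonneg positive_op_adj_comp C continuous_on_fpow a0 fpow_nonneg)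
  moreover have "0 \<le> V" unfolding V_def using a1
    by (intro cfc_nonneg positive_op_comp_adj C continuous_on_fpow fpow_nonneg) auto
  ultimately have "cmod (cinner (C x) y) \<le> (U + V) / 2"
    using power2_le_imp_le[of "cmod (cinner (C x) y)" "(U + V) / 2"] by simp
  then show ?thesis by (simp only: U_def V_def)
qed


section \<open>The numerical radius of an off-diagonal operator matrix\<close>

lemma le_powr_inverse:
  fixes a b p :: real
  assumes "0 \<le> a" "0 < p" "a powr p \<le> b"
  shows "a \<le> b powr (1 / p)"
proof -
  have "a = (a powr p) powr (1 / p)" using assms by (simp add: powr_powr)
  also have "\<dots> \<le> b powr (1 / p)" by (rule powr_mono2) (use assms in auto)
  finally show ?thesis .
qed

context
  fixes P R :: "'a::chilbert_space \<Rightarrow> 'a" and \<alpha> r :: real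
  assumes P: "positive_op P" and R: "positive_op R"
    and a0: "0 \<le> \<alpha>" and a1: "\<alpha> \<le> 1" and r: "1 \<le> r"
begin

lemma continuous_on_fpow_alpha:
  "continuous_on {0..} (fpow \<alpha>)" "continuous_on {0..} (fpow (1 - \<alpha>))"
  "continuous_on {0..} (fpow (\<alpha> * (2 * r)))" "continuous_on {0..} (fpow ((1 - \<alpha>) * (2 * r)))"
  using a0 a1 r by (auto intro!: continuous_on_fpow)

text \<open>Convexity of \<open>u \<mapsto> u\<^bsup>2r\<^esup>\<close>, then the Hoelder--McCarthy inequality for each term.\<close>

lemma mean_cinner_fpow_powr_le:
  assumes y: "norm y = 1"
  shows "((Re (cinner (cfc P (fpow \<alpha>) y) y) + Re (cinner (cfc R (fpow (1 - \<alpha>)) y) y)) / 2) powr (2 * r)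
    \<le> onorm (\<lambda>v. cfc P (fpow (\<alpha> * (2 * r))) v + cfc R (fpow ((1 - \<alpha>) * (2 * r))) v) / 2"
    (is "((?u + ?v) / 2) powr _ \<le> onorm ?W / 2")
proof -
  have p: "1 \<le> 2 * r" using r by simp
  have u: "0 \<le> ?u" by (rule cfc_nonneg[OF P continuous_on_fpow_alpha(1) fpow_nonneg])
  have v: "0 \<le> ?v" by (rule cfc_nonneg[OF R continuous_on_fpow_alpha(2) fpow_nonneg])
  have W: "bounded_clinear ?W"
    by (intro bounded_clinear_add bounded_clinear_cfc P R continuous_on_fpow_alpha)
  have "((?u + ?v) / 2) powr (2 * r) \<le> (?u powr (2 * r) + ?v powr (2 * r)) / 2"
    by (rule powr_midpoint_le[OF p u v])
  also have "\<dots> \<le> (Re (cinner (cfc P (fpow (\<alpha> * (2 * r))) y) y)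
      + Re (cinner (cfc R (fpow ((1 - \<alpha>) * (2 * r))) y) y)) / 2"
    using a1 by (intro divide_right_mono add_mono mccarthy_inequality[OF P a0 p y]
        mccarthy_inequality[OF R _ p y]) simp_all
  also have "\<dots> = Re (cinner (?W y) y) / 2" by (simp add: cinner_add_left)
  also have "\<dots> \<le> onorm ?W / 2"
    using Re_cinner_le[of "?W y" y] bounded_clinear_onorm[OF W, of y] y by simp
  finally show ?thesis .
qed

lemma mean_cinner_fpow_le:
  defines "M \<equiv> onorm (\<lambda>v. cfc P (fpow (\<alpha> * (2 * r))) v + cfc R (fpow ((1 - \<alpha>) * (2 * r))) v)"
  shows "(Re (cinner (cfc P (fpow \<alpha>) z) z) + Re (cinner (cfc R (fpow (1 - \<alpha>)) z) z)) / 2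
    \<le> (norm z)\<^sup>2 * (M / 2) powr (1 / (2 * r))"
proof (cases "z = 0")
  case True
  then show ?thesis
    by (simp add: bounded_clinear_map_zero bounded_clinear_cfc P R continuous_on_fpow_alpha)
next
  case False
  define y where "y = complex_of_real (1 / norm z) *\<^sub>C z"
  have y: "norm y = 1" using False by (simp add: y_def norm_scaleC norm_divide)
  have z: "z = complex_of_real (norm z) *\<^sub>C y" using False by (simp add: y_def)
  define u where "u = Re (cinner (cfc P (fpow \<alpha>) y) y)"
  define v where "v = Re (cinner (cfc R (fpow (1 - \<alpha>)) y) y)"
  have "0 \<le> u" "0 \<le> v"
    unfolding u_def v_def using cfc_nonneg P R continuous_on_fpow_alpha fpow_nonneg by blast+
  then have "(u + v) / 2 \<le> (M / 2) powr (1 / (2 * r))"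
    using r mean_cinner_fpow_powr_le[OF y] by (intro le_powr_inverse) (auto simp: u_def v_def M_def)
  moreover have "(Re (cinner (cfc P (fpow \<alpha>) z) z) + Re (cinner (cfc R (fpow (1 - \<alpha>)) z) z)) / 2
      = (norm z)\<^sup>2 * ((u + v) / 2)"
    by (subst (1 2 3 4) z)
      (simp add: cinner_cfc_scaleC P R continuous_on_fpow_alpha u_def v_def algebra_simps)
  moreover have "(norm z)\<^sup>2 * ((u + v) / 2) \<le> (norm z)\<^sup>2 * (M / 2) powr (1 / (2 * r))"
    using calculation(1) by (rule mult_left_mono) simp
  ultimately show ?thesis by simp
qed

end

lemma nrad_le:
  fixes S :: "'a::complex_inner \<Rightarrow> 'a"
  assumes "0 \<le> b" and bound: "\<And>w. norm w = 1 \<Longrightarrow> cmod (cinner (S w) w) \<le> b"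
  shows "nrad S \<le> b" and "0 \<le> nrad S"
proof -
  have bdd: "bdd_above ({0} \<union> {cmod (cinner (S x) x) | x. norm x = 1})"
    using assms by (intro bdd_aboveI[of _ b]) auto
  show "nrad S \<le> b" unfolding nrad_def using assms by (intro cSup_least) auto
  show "0 \<le> nrad S" unfolding nrad_def by (rule cSup_upper[OF _ bdd]) simp
qed

lemma nrad_powr_le:
  fixes S :: "'a::complex_inner \<Rightarrow> 'a"
  assumes "0 \<le> m" "0 < p" and bound: "\<And>w. norm w = 1 \<Longrightarrow> cmod (cinner (S w) w) \<le> m powr (1 / p)"
  shows "nrad S powr p \<le> m"
proof -
  have "nrad S powr p \<le> (m powr (1 / p)) powr p"
    using nrad_le[OF powr_ge_zero bound] assms by (intro powr_mono2) auto
  also have "\<dots> = m" using assms by (simp add: powr_powr)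
  finally show ?thesis .
qed

lemma cmod_cinner_offdiag_le:
  fixes B :: "'b::chilbert_space \<Rightarrow> 'a::chilbert_space" and C :: "'a \<Rightarrow> 'b"
  assumes B: "bounded_clinear B" and C: "bounded_clinear C"
    and a0: "0 \<le> \<alpha>" and a1: "\<alpha> \<le> 1" and r: "1 \<le> r" and w: "norm (x, y) = 1"
  defines "M1 \<equiv> onorm (\<lambda>v. cfc (adj C \<circ> C) (fpow (\<alpha> * (2 * r))) v + cfc (B \<circ> adj B) (fpow ((1 - \<alpha>) * (2 * r))) v)"
    and "M2 \<equiv> onorm (\<lambda>v. cfc (adj B \<circ> B) (fpow (\<alpha> * (2 * r))) v + cfc (C \<circ> adj C) (fpow ((1 - \<alpha>) * (2 * r))) v)"
  shows "cmod (cinner ((\<lambda>(x, y). (B y, C x)) (x, y)) (x, y)) \<le> (max M1 M2 / 2) powr (1 / (2 * r))"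
proof -
  note PB = positive_op_adj_comp[OF B] positive_op_comp_adj[OF B]
  note PC = positive_op_adj_comp[OF C] positive_op_comp_adj[OF C]
  let ?m = "(max M1 M2 / 2) powr (1 / (2 * r))"
  have "cmod (cinner ((\<lambda>(x, y). (B y, C x)) (x, y)) (x, y)) \<le> cmod (cinner (B y) x) + cmod (cinner (C x) y)"
    by (simp add: cinner_prod_def norm_triangle_ineq)
  also have "\<dots> \<le> (Re (cinner (cfc (adj B \<circ> B) (fpow \<alpha>) y) y) + Re (cinner (cfc (B \<circ> adj B) (fpow (1 - \<alpha>)) x) x)) / 2
      + (Re (cinner (cfc (adj C \<circ> C) (fpow \<alpha>) x) x) + Re (cinner (cfc (C \<circ> adj C) (fpow (1 - \<alpha>)) y) y)) / 2"
    by (intro add_mono cmod_cinner_le_mixed_mean B C a0 a1)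
  also have "\<dots> = (Re (cinner (cfc (adj C \<circ> C) (fpow \<alpha>) x) x) + Re (cinner (cfc (B \<circ> adj B) (fpow (1 - \<alpha>)) x) x)) / 2
      + (Re (cinner (cfc (adj B \<circ> B) (fpow \<alpha>) y) y) + Re (cinner (cfc (C \<circ> adj C) (fpow (1 - \<alpha>)) y) y)) / 2"
    by (simp add: field_simps)
  also have "\<dots> \<le> (norm x)\<^sup>2 * (M1 / 2) powr (1 / (2 * r)) + (norm y)\<^sup>2 * (M2 / 2) powr (1 / (2 * r))"
    unfolding M1_def M2_def
    by (intro add_mono mean_cinner_fpow_le PB PC a0 a1 r)
  also have "\<dots> \<le> (norm x)\<^sup>2 * ?m + (norm y)\<^sup>2 * ?m"
  proof -
    have "0 \<le> M1" "0 \<le> M2" unfolding M1_def M2_def using a0 a1 r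
      by (intro onorm_nonneg_bounded_clinear bounded_clinear_add bounded_clinear_cfc PB PC
          continuous_on_fpow; simp)+
    then show ?thesis using r by (intro add_mono mult_left_mono powr_mono2) auto
  qed
  also have "\<dots> = ?m" using w by (simp add: norm_prod_def flip: distrib_right)
  finally show ?thesis .
qed

theorem mainTheorem3:
  fixes B :: "'b::chilbert_space \<Rightarrow> 'a::chilbert_space"
    and C :: "'a \<Rightarrow> 'b"
    and r \<alpha> :: real
  assumes "bounded_clinear B" and "bounded_clinear C"
    and "1 \<le> r" and "0 \<le> \<alpha>" and "\<alpha> \<le> 1"
  shows "nrad (\<lambda>(x, y). (B y, C x)) powr (2 * r)
    \<le> 1/2 * max
        (onorm (\<lambda>v. op_pow (absop C) (4 * r * \<alpha>) v + op_pow (absop (adj B)) (4 * r * (1 - \<alpha>)) v))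
        (onorm (\<lambda>v. op_pow (absop B) (4 * r * \<alpha>) v + op_pow (absop (adj C)) (4 * r * (1 - \<alpha>)) v))"
proof -
  note B = assms(1) and C = assms(2) and r = assms(3) and a0 = assms(4) and a1 = assms(5)
  define M1 where "M1 = onorm (\<lambda>v. cfc (adj C \<circ> C) (fpow (\<alpha> * (2 * r))) v + cfc (B \<circ> adj B) (fpow ((1 - \<alpha>) * (2 * r))) v)"
  define M2 where "M2 = onorm (\<lambda>v. cfc (adj B \<circ> B) (fpow (\<alpha> * (2 * r))) v + cfc (C \<circ> adj C) (fpow ((1 - \<alpha>) * (2 * r))) v)"
  have "0 \<le> M1" unfolding M1_def using a0 a1 r
    by (intro onorm_nonneg_bounded_clinear bounded_clinear_add bounded_clinear_cfc positive_op_adj_comp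
        positive_op_comp_adj B C continuous_on_fpow) auto
  have bound: "nrad (\<lambda>(x, y). (B y, C x)) powr (2 * r) \<le> 1/2 * max M1 M2"
  proof (rule nrad_powr_le)
    show "cmod (cinner ((\<lambda>(x, y). (B y, C x)) w) w) \<le> (1/2 * max M1 M2) powr (1 / (2 * r))"
      if "norm w = 1" for w :: "'a \<times> 'b"
      using cmod_cinner_offdiag_le[OF B C a0 a1 r, of "fst w" "snd w"] that by (simp add: M1_def M2_def)
  qed (use \<open>0 \<le> M1\<close> r in auto)
  have powers: "op_pow (absop S) (4 * r * \<alpha>) = cfc (adj S \<circ> S) (fpow (\<alpha> * (2 * r)))"
    "op_pow (absop (adj S)) (4 * r * (1 - \<alpha>)) = cfc (S \<circ> adj S) (fpow ((1 - \<alpha>) * (2 * r)))"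
    if "bounded_clinear S" for S :: "'c::chilbert_space \<Rightarrow> 'd::chilbert_space"
  proof -
    have t: "0 \<le> 4 * r * \<alpha>" "0 \<le> 4 * r * (1 - \<alpha>)" using r a0 a1 by simp_all
    have e: "4 * r * \<alpha> / 2 = \<alpha> * (2 * r)" "4 * r * (1 - \<alpha>) / 2 = (1 - \<alpha>) * (2 * r)" by simp_all
    show "op_pow (absop S) (4 * r * \<alpha>) = cfc (adj S \<circ> S) (fpow (\<alpha> * (2 * r)))"
      using op_pow_absop[OF that t(1)] unfolding e(1) .
    show "op_pow (absop (adj S)) (4 * r * (1 - \<alpha>)) = cfc (S \<circ> adj S) (fpow ((1 - \<alpha>) * (2 * r)))"
      using op_pow_absop_adj[OF that t(2)] unfolding e(2) .
  qed
  show ?thesis using bound unfolding powers[OF B] powers[OF C] M1_def M2_def .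
qed

end
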